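(* Let $\eta^0_1,\dots,\eta^0_{k_0}$ be distinct skew-normal parameters $\eta_i^0=(\theta_i^0,v_i^0,m_i^0)$ with $v_i^0>0$, satisfying $P_1(\eta^0)\neq0$ and $P_2(\eta^0)\ne0$. Then for every $r\ge1$ the functions $$\Big\{\frac{\partial^{|\kappa|}f}{\partial\theta^{\kappa_1}\partial v^{\kappa_2}\partial m^{\kappa_3}}(\cdot|\eta_i^0):\ \kappa\in\mathcal F_r,\ i=1,\dots,k_0\Big\}$$ are linearly independent.
   Context: Skew-normal kernel: $f(x|\theta,v,m)=\frac{2}{\sigma}\varphi\!\left(\frac{x-\theta}{\sigma}\right)\Phi\!\left(\frac{m(x-\theta)}{\sigma}\right)$, $\sigma=\sqrt v$. $P_1(\eta)=\prod_{j=1}^{k_0}m_j$, $P_2(\eta)=\prod_{1\le i\ne j\le k_0}\{(\theta_i-\theta_j)^2+[v_i(1+m_j^2)-v_j(1+m_i^2)]^2\}$. $\mathcal F_r=\{\kappa\in\mathbb{Z}_{\ge0}^3:\kappa_1\le1,\kappa_3=0,|\kappa|\le r\}\cup\{\kappa:\kappa_1\le1,\kappa_2=0,\kappa_3\ge1,|\kappa|\le r\}$ (so it contains $(0,0,0)$, giving $f$ itself). *)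

theory Defs
  imports "HOL-Probability.Probability"
begin

definition std_phi :: "real \<Rightarrow> real" where
  "std_phi z = exp (- z\<^sup>2 / 2) / sqrt (2 * pi)"

definition std_Phi :: "real \<Rightarrow> real" where
  "std_Phi z = (LBINT t:{..z}. std_phi t)"

definition skewn :: "real \<Rightarrow> real \<Rightarrow> real \<Rightarrow> real \<Rightarrow> real" where
  "skewn x \<theta> v m = 2 / sqrt v * std_phi ((x - \<theta>) / sqrt v) * std_Phi (m * (x - \<theta>) / sqrt v)"

definition d_theta :: "(real \<Rightarrow> real \<Rightarrow> real \<Rightarrow> real) \<Rightarrow> real \<Rightarrow> real \<Rightarrow> real \<Rightarrow> real" where
  "d_theta g = (\<lambda>\<theta> v m. deriv (\<lambda>t. g t v m) \<theta>)"

definition d_v :: "(real \<Rightarrow> real \<Rightarrow> real \<Rightarrow> real) \<Rightarrow> real \<Rightarrow> real \<Rightarrow> real \<Rightarrow> real" where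
  "d_v g = (\<lambda>\<theta> v m. deriv (\<lambda>t. g \<theta> t m) v)"

definition d_m :: "(real \<Rightarrow> real \<Rightarrow> real \<Rightarrow> real) \<Rightarrow> real \<Rightarrow> real \<Rightarrow> real \<Rightarrow> real" where
  "d_m g = (\<lambda>\<theta> v m. deriv (\<lambda>t. g \<theta> v t) m)"

definition skewn_deriv :: "nat \<times> nat \<times> nat \<Rightarrow> real \<Rightarrow> real \<Rightarrow> real \<Rightarrow> real \<Rightarrow> real" where
  "skewn_deriv \<kappa> x \<theta> v m =
     (case \<kappa> of (a, b, c) \<Rightarrow> (d_m ^^ c) ((d_v ^^ b) ((d_theta ^^ a) (skewn x))) \<theta> v m)"

definition F_set :: "nat \<Rightarrow> (nat \<times> nat \<times> nat) set" where
  "F_set r = {(a, b, c). a \<le> 1 \<and> c = 0 \<and> a + b + c \<le> r}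
           \<union> {(a, b, c). a \<le> 1 \<and> b = 0 \<and> c \<ge> 1 \<and> a + b + c \<le> r}"

definition P1 :: "nat \<Rightarrow> (nat \<Rightarrow> real) \<Rightarrow> real" where
  "P1 k0 m = (\<Prod>j<k0. m j)"

definition P2 :: "nat \<Rightarrow> (nat \<Rightarrow> real) \<Rightarrow> (nat \<Rightarrow> real) \<Rightarrow> (nat \<Rightarrow> real) \<Rightarrow> real" where
  "P2 k0 \<theta> v m = (\<Prod>(i, j) \<in> {(i, j). i < k0 \<and> j < k0 \<and> i \<noteq> j}.
      (\<theta> i - \<theta> j)\<^sup>2 + (v i * (1 + (m j)\<^sup>2) - v j * (1 + (m i)\<^sup>2))\<^sup>2)"

end

theory Submission
  imports Defs "HOL-Real_Asymp.Real_Asymp" "HOL-Computational_Algebra.Polynomial"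
begin

text \<open>With \<open>y = x - \<theta>\<close> and \<open>s = 1 / sqrt v\<close>, every derivative in the family has the form
  \<open>A(y) exp(- s\<^sup>2 y\<^sup>2 / 2) \<Phi>(m s y) + B(y) exp(- (1 + m\<^sup>2) s\<^sup>2 y\<^sup>2 / 2)\<close> with polynomials \<open>A\<close>, \<open>B\<close>:
  the derivative of order \<open>(a, b, 0)\<close> has \<open>deg A = a + 2b\<close>, those of order \<open>(a, 0, c)\<close> have \<open>A = 0\<close>
  and \<open>deg B = a + 2c - 1\<close>.  \<open>P\<^sub>1 \<noteq> 0\<close> keeps every \<open>\<Phi>\<close>-term non-constant, and \<open>P\<^sub>2 \<noteq> 0\<close> gives
  distinct components distinct exponents.

  Functions \<open>p(x) exp(a x\<^sup>2 + b x) \<Phi>(g x + d)\<close> and \<open>q(x) exp(a' x\<^sup>2 + b' x)\<close> with pairwise distinct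
  exponents are linearly independent.  For the pure exponentials, divide by the dominant one and let
  \<open>x \<rightarrow> \<infinity>\<close>.  A \<open>\<Phi>\<close>-exponent \<open>(\<alpha>, \<beta>)\<close> is isolated by repeatedly differentiating after division by
  \<open>exp(\<alpha> x\<^sup>2 + \<beta> x)\<close>: this lowers the degree of its own coefficients, preserves the other ones, and the
  \<open>\<phi>\<close>-terms it creates are pure exponentials.  A lone \<open>\<Phi>\<close>-term is detected by its limits \<open>0\<close> and \<open>1\<close>
  at \<open>\<plusminus>\<infinity>\<close>.  Within one component the distinct degrees then force all coefficients to vanish.\<close>

section \<open>The standard normal distribution function\<close>

lemma std_phi_eq_std_normal_density: "std_phi = std_normal_density"
  by (auto simp: std_phi_def std_normal_density_def fun_eq_iff)

lemma std_Phi_eq_cdf: "std_Phi x = cdf std_normal_distribution x"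
proof -
  interpret real_distribution std_normal_distribution by (rule real_dist_normal_dist)
  have "cdf std_normal_distribution x = measure std_normal_distribution {..x}"
    by (simp add: cdf_def)
  also have "\<dots> = integral\<^sup>L std_normal_distribution (indicator {..x})"
    by (simp add: integral_indicator emeasure_eq_measure)
  also have "\<dots> = integral\<^sup>L lborel (\<lambda>t. std_normal_density t *\<^sub>R indicator {..x} t)"
    by (rule integral_density) auto
  also have "\<dots> = std_Phi x"
    by (simp add: std_Phi_def set_lebesgue_integral_def std_phi_eq_std_normal_density mult.commute)
  finally show ?thesis ..
qed

lemma std_Phi_tendsto_at_top: "(std_Phi \<longlongrightarrow> 1) at_top"
proof -
  interpret real_distribution std_normal_distribution by (rule real_dist_normal_dist)
  show ?thesis unfolding std_Phi_eq_cdf[abs_def] using cdf_lim_at_top_prob by simp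
qed

lemma std_Phi_tendsto_at_bot: "(std_Phi \<longlongrightarrow> 0) at_bot"
proof -
  interpret real_distribution std_normal_distribution by (rule real_dist_normal_dist)
  show ?thesis unfolding std_Phi_eq_cdf[abs_def] using cdf_lim_at_bot by simp
qed

lemma integrable_std_phi: "integrable lborel std_phi"
  using integrable_std_normal_moment[of 0] by (simp add: std_phi_eq_std_normal_density)

lemma std_Phi_eq_interval_integral: "std_Phi z = std_Phi 0 + (LBINT t=0..z. std_phi t)"
proof -
  have integrable: "interval_lebesgue_integrable lborel a b std_phi" for a b
    using integrable_std_phi unfolding interval_lebesgue_integrable_def set_integrable_def
    by (auto simp: mult.commute[of "indicator _ _"] intro!: integrable_real_mult_indicator)
  have from_minus_infinity: "std_Phi z = (LBINT t=-\<infinity>..ereal z. std_phi t)" for z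
  proof -
    have "(LBINT t=-\<infinity>..ereal z. std_phi t) = (LBINT t:{..<z}. std_phi t)"
      by (simp add: interval_lebesgue_integral_def einterval_eq_Iic)
    also have "\<dots> = std_Phi z" unfolding std_Phi_def
    proof (rule set_integral_cong_set)
      show "AE t in lborel. (t \<in> {..z}) = (t \<in> {..<z})"
        using AE_lborel_singleton[of z] by eventually_elim auto
    qed (auto simp: set_borel_measurable_def std_phi_def)
    finally show ?thesis ..
  qed
  show ?thesis unfolding from_minus_infinity zero_ereal_def
    by (rule interval_integral_sum[symmetric]) (rule integrable)
qed

lemma DERIV_std_Phi: "(std_Phi has_real_derivative std_phi z) (at z)"
proof -
  define a where "a = min z 0 - 1"
  define b where "b = max z 0 + 1"
  have "continuous_on {a..b} std_phi"
    unfolding std_phi_def by (intro continuous_intros) auto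
  then have "((\<lambda>u. LBINT y=0..u. std_phi y) has_vector_derivative (std_phi z)) (at z within {a..b})"
    using interval_integral_FTC2[of a 0 b std_phi z] by (auto simp: a_def b_def zero_ereal_def)
  then have "((\<lambda>u. LBINT y=0..u. std_phi y) has_vector_derivative (std_phi z)) (at z)"
    by (subst (asm) at_within_Icc_at) (auto simp: a_def b_def)
  then have "((\<lambda>u. std_Phi 0 + (LBINT y=0..u. std_phi y)) has_real_derivative (std_phi z)) (at z)"
    by (auto simp: has_real_derivative_iff_has_vector_derivative intro!: derivative_eq_intros)
  then show ?thesis by (subst (asm) std_Phi_eq_interval_integral[symmetric])
qed

lemma DERIV_std_Phi_comp [derivative_intros]:
  "(f has_real_derivative f') (at x within S) \<Longrightarrow>
   ((\<lambda>x. std_Phi (f x)) has_real_derivative std_phi (f x) * f') (at x within S)"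
  by (rule DERIV_chain2[OF DERIV_std_Phi])

section \<open>Sums of polynomials times Gaussian-type exponentials\<close>

lemma tendsto_poly_exp_quad_at_top:
  assumes "a < 0 \<or> (a = 0 \<and> b < 0)"
  shows "((\<lambda>x::real. poly q x * exp (a*x^2 + b*x)) \<longlongrightarrow> 0) at_top"
proof -
  have m: "((\<lambda>x::real. x^i * exp (a*x^2 + b*x)) \<longlongrightarrow> 0) at_top" for i
  proof (cases "a < 0")
    case True then show ?thesis by real_asymp
  next
    case False
    with assms have "a = 0" "b < 0" by auto
    then show ?thesis by simp real_asymp
  qed
  have "((\<lambda>x. \<Sum>i\<le>degree q. coeff q i * (x^i * exp (a*x^2 + b*x))) \<longlongrightarrow> 0) at_top"
    by (rule tendsto_null_sum) (intro tendsto_mult_right_zero m)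
  then show ?thesis
    by (simp add: poly_altdef sum_distrib_right mult.assoc)
qed

lemma tendsto_poly_exp_quad_at_bot:
  assumes "a < 0"
  shows "((\<lambda>x::real. poly q x * exp (a*x^2 + b*x)) \<longlongrightarrow> 0) at_bot"
proof -
  have m: "((\<lambda>x::real. x^i * exp (a*x^2 + b*x)) \<longlongrightarrow> 0) at_bot" for i
    using assms by real_asymp
  have "((\<lambda>x. \<Sum>i\<le>degree q. coeff q i * (x^i * exp (a*x^2 + b*x))) \<longlongrightarrow> 0) at_bot"
    by (rule tendsto_null_sum) (intro tendsto_mult_right_zero m)
  then show ?thesis
    by (simp add: poly_altdef sum_distrib_right mult.assoc)
qed

lemma poly_eq_0_if_tendsto_0:
  fixes p :: "real poly"
  assumes "(poly p \<longlongrightarrow> 0) at_top"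
  shows "p = 0"
proof (rule ccontr)
  assume nz: "p \<noteq> 0"
  show False
  proof (cases "degree p = 0")
    case True
    then obtain k where p: "p = [:k:]" by (metis degree_eq_zeroE)
    with nz have "k \<noteq> 0" by auto
    moreover have "poly p = (\<lambda>_. k)" by (auto simp: p fun_eq_iff)
    with assms have "((\<lambda>_::real. k) \<longlongrightarrow> 0) at_top" by simp
    ultimately show False by (simp add: tendsto_const_iff)
  next
    case False
    have "filterlim (poly p) at_infinity at_top"
      using filterlim_poly_at_infinity[of p] False filterlim_mono[OF _ _ at_top_le_at_infinity]
      by (metis filterlim_mono gr0I order_refl)
    then show False using assms not_tendsto_and_filterlim_at_infinity[of at_top "poly p" 0] by auto
  qed
qed

definition quad_exp_sum :: "(real \<times> real) set \<Rightarrow> (real \<times> real \<Rightarrow> real poly) \<Rightarrow> real \<Rightarrow> real" where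
  "quad_exp_sum E c x = (\<Sum>e\<in>E. poly (c e) x * exp (fst e * x^2 + snd e * x))"

text \<open>Divide by the lexicographically largest exponential and let \<open>x \<rightarrow> \<infinity>\<close>.\<close>

lemma quad_exp_sum_eq_0_imp_coeffs_0:
  assumes "finite E" "\<And>x. quad_exp_sum E c x = 0"
  shows "\<forall>e\<in>E. c e = 0"
  using assms
proof (induction "card E" arbitrary: E)
  case 0
  then show ?case by auto
next
  case (Suc n)
  then have "E \<noteq> {}" by auto
  define A where "A = Max (fst ` E)"
  have A: "\<And>e. e \<in> E \<Longrightarrow> fst e \<le> A" and "A \<in> fst ` E"
    using Suc.prems \<open>E \<noteq> {}\<close> by (auto simp: A_def)
  define E1 where "E1 = {e\<in>E. fst e = A}"
  have "finite E1" "E1 \<noteq> {}" using Suc.prems \<open>A \<in> fst ` E\<close> by (auto simp: E1_def)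
  define B where "B = Max (snd ` E1)"
  have B: "B \<in> snd ` E1" "\<And>e. e \<in> E1 \<Longrightarrow> snd e \<le> B"
    using \<open>finite E1\<close> \<open>E1 \<noteq> {}\<close> by (auto simp: B_def)
  define e0 where "e0 = (A, B)"
  have "e0 \<in> E" using B by (auto simp: e0_def E1_def)
  have dominated: "fst e - A < 0 \<or> (fst e - A = 0 \<and> snd e - B < 0)" if "e \<in> E - {e0}" for e
  proof -
    have "fst e = A \<Longrightarrow> snd e < B"
      using B(2)[of e] that by (cases e) (auto simp: E1_def e0_def)
    then show ?thesis using A[of e] that by force
  qed
  have c0_eq: "poly (c e0) x = - (\<Sum>e\<in>E-{e0}. poly (c e) x * exp ((fst e - A)*x^2 + (snd e - B)*x))" for x
  proof -
    have "0 = quad_exp_sum E c x / exp (A*x^2 + B*x)" using Suc.prems by simp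
    also have "\<dots> = (\<Sum>e\<in>E. poly (c e) x * exp ((fst e - A)*x^2 + (snd e - B)*x))"
      unfolding quad_exp_sum_def sum_divide_distrib
      by (intro sum.cong refl) (simp add: exp_diff algebra_simps)
    also have "\<dots> = poly (c e0) x + (\<Sum>e\<in>E-{e0}. poly (c e) x * exp ((fst e - A)*x^2 + (snd e - B)*x))"
      using Suc.prems \<open>e0 \<in> E\<close> by (subst sum.remove[of _ e0]) (auto simp: e0_def)
    finally show ?thesis by linarith
  qed
  have "((\<lambda>x. - (\<Sum>e\<in>E-{e0}. poly (c e) x * exp ((fst e - A)*x^2 + (snd e - B)*x))) \<longlongrightarrow> 0) at_top"
    by (rule tendsto_minus_cancel_left[THEN iffD1], simp, rule tendsto_null_sum)
       (use dominated tendsto_poly_exp_quad_at_top in auto)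
  then have "(poly (c e0) \<longlongrightarrow> 0) at_top" by (simp add: c0_eq[abs_def])
  then have "c e0 = 0" by (rule poly_eq_0_if_tendsto_0)
  have "quad_exp_sum (E - {e0}) c x = 0" for x
    using Suc.prems \<open>e0 \<in> E\<close> \<open>c e0 = 0\<close> by (simp add: quad_exp_sum_def sum.remove[of E e0])
  moreover have "n = card (E - {e0})" using Suc \<open>e0 \<in> E\<close> by auto
  ultimately have "\<forall>e\<in>E-{e0}. c e = 0" using Suc by auto
  with \<open>c e0 = 0\<close> show ?case by auto
qed

lemma sum_eq_quad_exp_sum_image:
  assumes "finite T"
  shows "(\<Sum>t\<in>T. poly (q t) x * exp (fst (h t) * x^2 + snd (h t) * x)) =
         quad_exp_sum (h ` T) (\<lambda>e. \<Sum>t\<in>{t\<in>T. h t = e}. q t) x"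
  unfolding quad_exp_sum_def sum.image_gen[OF assms, of _ h]
  by (intro sum.cong refl) (simp add: poly_sum sum_distrib_right)

lemma sum_quad_exp_eq_0_imp_coeffs_0:
  fixes h :: "'i \<Rightarrow> real \<times> real"
  assumes "finite T" "inj_on h T"
    and "\<And>x. (\<Sum>t\<in>T. poly (q t) x * exp (fst (h t) * x^2 + snd (h t) * x)) = 0"
  shows "\<forall>t\<in>T. q t = 0"
proof
  fix t assume "t \<in> T"
  have "quad_exp_sum (h ` T) (\<lambda>e. \<Sum>s\<in>{s\<in>T. h s = e}. q s) x = 0" for x
    using assms(3)[of x] by (simp add: sum_eq_quad_exp_sum_image[OF assms(1)])
  then have "\<forall>e\<in>h ` T. (\<Sum>s\<in>{s\<in>T. h s = e}. q s) = 0"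
    using assms(1) by (intro quad_exp_sum_eq_0_imp_coeffs_0) auto
  moreover have "{s\<in>T. h s = h t} = {t}" using assms(2) \<open>t \<in> T\<close> by (auto simp: inj_on_def)
  ultimately show "q t = 0" using \<open>t \<in> T\<close> by auto
qed

definition quad_exp_deriv_coeff :: "(real \<times> real \<Rightarrow> real poly) \<Rightarrow> real \<times> real \<Rightarrow> real poly" where
  "quad_exp_deriv_coeff c e = pderiv (c e) + [:snd e, 2 * fst e:] * c e"

lemma DERIV_quad_exp_sum:
  assumes "finite E"
  shows "(quad_exp_sum E c has_real_derivative quad_exp_sum E (quad_exp_deriv_coeff c) x) (at x)"
  unfolding quad_exp_sum_def[abs_def]
  by (rule DERIV_sum) (auto intro!: derivative_eq_intros simp: quad_exp_deriv_coeff_def algebra_simps)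

lemma quad_exp_sum_union:
  assumes "finite E" "finite E'"
  shows "quad_exp_sum E c x + quad_exp_sum E' c' x =
    quad_exp_sum (E \<union> E') (\<lambda>e. (if e \<in> E then c e else 0) + (if e \<in> E' then c' e else 0)) x"
proof -
  have extend: "quad_exp_sum F c x = quad_exp_sum (E \<union> E') (\<lambda>e. if e \<in> F then c e else 0) x"
    if "F \<subseteq> E \<union> E'" for F and c :: "real \<times> real \<Rightarrow> real poly"
    unfolding quad_exp_sum_def using assms that
    by (subst sum.mono_neutral_cong_left[of "E \<union> E'" F]) auto
  have "quad_exp_sum E c x = quad_exp_sum (E \<union> E') (\<lambda>e. if e \<in> E then c e else 0) x"
    and "quad_exp_sum E' c' x = quad_exp_sum (E \<union> E') (\<lambda>e. if e \<in> E' then c' e else 0) x"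
    by (rule extend; simp)+
  then show ?thesis by (simp add: quad_exp_sum_def sum.distrib[symmetric] distrib_right)
qed
lemma std_Phi_affine_plus_quad_exp_const_imp_0:
  assumes "g \<noteq> 0" "a < 0"
    and const: "\<And>x. p * std_Phi (g * x + d) + poly q x * exp (a * x^2 + b * x) = C"
  shows "p = 0"
proof -
  have C_eq: "C = p * l" if F: "F = at_top \<or> F = at_bot" and lim: "((\<lambda>x. std_Phi (g * x + d)) \<longlongrightarrow> l) F"
    for F l
  proof -
    have "((\<lambda>x. poly q x * exp (a * x^2 + b * x)) \<longlongrightarrow> 0) F"
      using F \<open>a < 0\<close> tendsto_poly_exp_quad_at_top tendsto_poly_exp_quad_at_bot by blast
    with lim have "((\<lambda>x. p * std_Phi (g * x + d) + poly q x * exp (a * x^2 + b * x)) \<longlongrightarrow> p * l + 0) F"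
      by (intro tendsto_intros)
    moreover have "F \<noteq> bot"
      using F by (elim disjE) simp_all
    ultimately show ?thesis using const by (simp add: tendsto_const_iff)
  qed
  consider "g > 0" | "g < 0" using \<open>g \<noteq> 0\<close> by linarith
  then have "\<exists>F0 F1. (F0 = at_top \<or> F0 = at_bot) \<and> (F1 = at_top \<or> F1 = at_bot) \<and>
      ((\<lambda>x. std_Phi (g * x + d)) \<longlongrightarrow> 0) F0 \<and> ((\<lambda>x. std_Phi (g * x + d)) \<longlongrightarrow> 1) F1"
  proof cases
    case 1
    then have "filterlim (\<lambda>x. g * x + d) at_bot at_bot" "filterlim (\<lambda>x. g * x + d) at_top at_top"
      by real_asymp+
    then show ?thesis
      by (intro exI[of _ at_bot] exI[of _ at_top])
         (auto intro: filterlim_compose[OF std_Phi_tendsto_at_bot] filterlim_compose[OF std_Phi_tendsto_at_top])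
  next
    case 2
    then have "filterlim (\<lambda>x. g * x + d) at_bot at_top" "filterlim (\<lambda>x. g * x + d) at_top at_bot"
      by real_asymp+
    then show ?thesis
      by (intro exI[of _ at_top] exI[of _ at_bot])
         (auto intro: filterlim_compose[OF std_Phi_tendsto_at_bot] filterlim_compose[OF std_Phi_tendsto_at_top])
  qed
  then have "C = 0" "C = p" using C_eq by (metis mult_zero_right, metis mult_1_right)
  then show ?thesis by simp
qed

section \<open>Sums mixing Gaussian-type exponentials and \<open>std_Phi\<close>\<close>

definition mixed_sum :: "'i set \<Rightarrow> ('i \<Rightarrow> real poly) \<Rightarrow> ('i \<Rightarrow> real) \<Rightarrow> ('i \<Rightarrow> real) \<Rightarrow> ('i \<Rightarrow> real)
    \<Rightarrow> ('i \<Rightarrow> real) \<Rightarrow> (real \<times> real) set \<Rightarrow> (real \<times> real \<Rightarrow> real poly) \<Rightarrow> real \<Rightarrow> real" where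
  "mixed_sum T P a b g d E c x =
     (\<Sum>t\<in>T. poly (P t) x * exp (a t * x^2 + b t * x) * std_Phi (g t * x + d t)) + quad_exp_sum E c x"

lemma DERIV_poly_exp_std_Phi:
  "((\<lambda>x. poly p x * exp (a*x^2 + b*x) * std_Phi (g*x + d)) has_real_derivative
     poly (pderiv p + [:b, 2*a:] * p) x * exp (a*x^2 + b*x) * std_Phi (g*x + d)
     + poly (smult (g * exp (- (d^2/2)) / sqrt (2*pi)) p) x * exp ((a - g^2/2)*x^2 + (b - g*d)*x)) (at x)"
proof -
  have e: "exp (a*x^2 + b*x) * std_phi (g*x + d) = exp (- (d^2/2)) / sqrt (2*pi) * exp ((a - g^2/2)*x^2 + (b - g*d)*x)"
  proof -
    have "exp (a*x^2 + b*x) * exp (- ((g*x + d)^2) / 2) = exp (- (d^2/2)) * exp ((a - g^2/2)*x^2 + (b - g*d)*x)"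
      by (simp add: exp_add[symmetric] power2_eq_square field_simps)
    then show ?thesis by (simp add: std_phi_def)
  qed
  have "((\<lambda>x. poly p x * exp (a*x^2 + b*x) * std_Phi (g*x + d)) has_real_derivative
     (poly (pderiv p) x * exp (a*x^2 + b*x) + poly p x * (exp (a*x^2 + b*x) * (2*a*x + b))) * std_Phi (g*x + d)
     + poly p x * g * (exp (a*x^2 + b*x) * std_phi (g*x + d))) (at x)"
    by (auto intro!: derivative_eq_intros simp: algebra_simps)
  also have "(poly (pderiv p) x * exp (a*x^2 + b*x) + poly p x * (exp (a*x^2 + b*x) * (2*a*x + b))) * std_Phi (g*x + d)
     + poly p x * g * (exp (a*x^2 + b*x) * std_phi (g*x + d)) =
     poly (pderiv p + [:b, 2*a:] * p) x * exp (a*x^2 + b*x) * std_Phi (g*x + d)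
     + poly (smult (g * exp (- (d^2/2)) / sqrt (2*pi)) p) x * exp ((a - g^2/2)*x^2 + (b - g*d)*x)"
    unfolding e by (simp add: algebra_simps)
  finally show ?thesis .
qed

text \<open>Differentiating a vanishing \<open>mixed_sum\<close> after dividing it by \<open>exp (\<alpha> x\<^sup>2 + \<beta> x)\<close> acts on the
  coefficient \<open>P t\<close> by the following operator (the \<open>std_phi\<close>-terms it produces are absorbed into
  the \<open>quad_exp_sum\<close>).  It is plain \<open>pderiv\<close> for the exponent \<open>(\<alpha>, \<beta>)\<close> itself and injective for
  every other exponent.\<close>

definition twisted_pderiv :: "('i \<Rightarrow> real) \<Rightarrow> ('i \<Rightarrow> real) \<Rightarrow> real \<Rightarrow> real \<Rightarrow> 'i \<Rightarrow> real poly \<Rightarrow> real poly" where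
  "twisted_pderiv a b \<alpha> \<beta> t q = pderiv q + [:b t - \<beta>, 2 * (a t - \<alpha>):] * q"

lemma twisted_pderiv_same_exponent: "(a t, b t) = (\<alpha>, \<beta>) \<Longrightarrow> twisted_pderiv a b \<alpha> \<beta> t = pderiv"
  by (auto simp: twisted_pderiv_def fun_eq_iff)

lemma mixed_sum_twisted_pderiv_eq_0:
  assumes T: "finite T" and E: "finite E" and H: "\<And>x. mixed_sum T P a b g d E c x = 0"
  shows "\<exists>E' c'. finite E' \<and> (\<forall>x. mixed_sum T (\<lambda>t. twisted_pderiv a b \<alpha> \<beta> t (P t)) a b g d E' c' x = 0)"
proof -
  define h where "h t = (a t - (g t)^2/2, b t - g t * d t)" for t
  define k where "k t = smult (g t * exp (- ((d t)^2/2)) / sqrt (2*pi)) (P t)" for t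
  define c1 where "c1 e = quad_exp_deriv_coeff c e - [:\<beta>, 2*\<alpha>:] * c e" for e
  have derivative: "(mixed_sum T P a b g d E c has_real_derivative
      (\<Sum>t\<in>T. poly (pderiv (P t) + [:b t, 2*a t:] * P t) x * exp (a t*x^2 + b t*x) * std_Phi (g t*x + d t)
        + poly (k t) x * exp (fst (h t) * x^2 + snd (h t) * x)) + quad_exp_sum E (quad_exp_deriv_coeff c) x) (at x)" for x
    unfolding mixed_sum_def[abs_def] k_def h_def fst_conv snd_conv
    by (intro DERIV_add DERIV_sum DERIV_poly_exp_std_Phi DERIV_quad_exp_sum[OF E])
  have derivative_eq_0: "(\<Sum>t\<in>T. poly (pderiv (P t) + [:b t, 2*a t:] * P t) x * exp (a t*x^2 + b t*x) * std_Phi (g t*x + d t)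
        + poly (k t) x * exp (fst (h t) * x^2 + snd (h t) * x)) + quad_exp_sum E (quad_exp_deriv_coeff c) x = 0" for x
  proof -
    have "mixed_sum T P a b g d E c = (\<lambda>_. 0)" using H by (simp add: fun_eq_iff)
    then have "(mixed_sum T P a b g d E c has_real_derivative 0) (at x)" by simp
    then show ?thesis using derivative DERIV_unique by blast
  qed
  have "mixed_sum T (\<lambda>t. twisted_pderiv a b \<alpha> \<beta> t (P t)) a b g d E c1 x + quad_exp_sum (h ` T) (\<lambda>e. \<Sum>t\<in>{t\<in>T. h t = e}. k t) x
      = (\<Sum>t\<in>T. poly (pderiv (P t) + [:b t, 2*a t:] * P t) x * exp (a t*x^2 + b t*x) * std_Phi (g t*x + d t)
        + poly (k t) x * exp (fst (h t) * x^2 + snd (h t) * x)) + quad_exp_sum E (quad_exp_deriv_coeff c) x - (2*\<alpha>*x + \<beta>) * mixed_sum T P a b g d E c x" for x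
    unfolding mixed_sum_def sum_eq_quad_exp_sum_image[OF T, symmetric] sum.distrib
    by (simp add: twisted_pderiv_def c1_def quad_exp_sum_def algebra_simps sum_distrib_left sum_subtractf)
  then have "mixed_sum T (\<lambda>t. twisted_pderiv a b \<alpha> \<beta> t (P t)) a b g d E c1 x + quad_exp_sum (h ` T) (\<lambda>e. \<Sum>t\<in>{t\<in>T. h t = e}. k t) x = 0" for x
    using derivative_eq_0 H by simp
  then have "mixed_sum T (\<lambda>t. twisted_pderiv a b \<alpha> \<beta> t (P t)) a b g d (E \<union> h ` T)
      (\<lambda>e. (if e \<in> E then c1 e else 0) + (if e \<in> h ` T then (\<Sum>t\<in>{t\<in>T. h t = e}. k t) else 0)) x = 0" for x
    unfolding mixed_sum_def using T E by (subst quad_exp_sum_union[symmetric]) (auto simp: add.assoc)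
  then show ?thesis using T E by blast
qed

lemma mixed_sum_funpow_twisted_pderiv_eq_0:
  assumes T: "finite T"
  shows "finite E \<Longrightarrow> (\<And>x. mixed_sum T P a b g d E c x = 0) \<Longrightarrow>
    \<exists>E' c'. finite E' \<and> (\<forall>x. mixed_sum T (\<lambda>t. (twisted_pderiv a b \<alpha> \<beta> t ^^ n) (P t)) a b g d E' c' x = 0)"
proof (induction n)
  case 0
  then show ?case by auto
next
  case (Suc n)
  then obtain E' c' where "finite E'" "\<And>x. mixed_sum T (\<lambda>t. (twisted_pderiv a b \<alpha> \<beta> t ^^ n) (P t)) a b g d E' c' x = 0" by blast
  from mixed_sum_twisted_pderiv_eq_0[OF T this, of \<alpha> \<beta>] show ?case by simp
qed

lemma std_Phi_sum_eq_0_imp_coeffs_0: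
  fixes T :: "'i set" and p g d :: "'i \<Rightarrow> real"
  assumes T: "finite T" and g: "\<And>t. t \<in> T \<Longrightarrow> g t \<noteq> 0"
    and inj: "inj_on (\<lambda>t. ((g t)^2, g t * d t)) T" and E: "finite E"
    and H: "\<And>x. (\<Sum>t\<in>T. p t * std_Phi (g t * x + d t)) + quad_exp_sum E c x = 0"
  shows "\<forall>t\<in>T. p t = 0"
proof
  fix t0 assume t0: "t0 \<in> T"
  define h where "h t = (- ((g t)^2 / 2), - (g t * d t))" for t
  define k where "k t = [:p t * g t * exp (- ((d t)^2/2)) / sqrt (2*pi):]" for t
  have phi: "p t * (std_phi (g t * x + d t) * g t) = poly (k t) x * exp (fst (h t) * x^2 + snd (h t) * x)" for t x
  proof -
    have "exp (- ((g t * x + d t)^2) / 2) = exp (- ((d t)^2/2)) * exp (fst (h t) * x^2 + snd (h t) * x)"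
      by (subst exp_add[symmetric]) (rule arg_cong[where f=exp], simp add: h_def power2_eq_square field_simps)
    then show ?thesis by (simp add: std_phi_def k_def)
  qed
  define cc where "cc e = (if e \<in> h ` T then (\<Sum>t\<in>{t\<in>T. h t = e}. k t) else 0)
    + (if e \<in> E then quad_exp_deriv_coeff c e else 0)" for e
  have derivative_eq_0: "quad_exp_sum (h ` T \<union> E) cc x = 0" for x
  proof -
    have "((\<lambda>x. (\<Sum>t\<in>T. p t * std_Phi (g t * x + d t)) + quad_exp_sum E c x) has_real_derivative
        (\<Sum>t\<in>T. p t * (std_phi (g t * x + d t) * g t)) + quad_exp_sum E (quad_exp_deriv_coeff c) x) (at x)"
      by (rule derivative_eq_intros DERIV_quad_exp_sum[OF E] refl | simp)+ (simp add: mult_ac)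
    moreover have "((\<lambda>x. (\<Sum>t\<in>T. p t * std_Phi (g t * x + d t)) + quad_exp_sum E c x)
        has_real_derivative 0) (at x)"
      using H by simp
    ultimately have "(\<Sum>t\<in>T. p t * (std_phi (g t * x + d t) * g t)) + quad_exp_sum E (quad_exp_deriv_coeff c) x = 0"
      using DERIV_unique by blast
    then show ?thesis unfolding phi sum_eq_quad_exp_sum_image[OF T] cc_def
      by (subst (asm) quad_exp_sum_union) (use T E in auto)
  qed
  have "cc (h t0) = 0"
    using quad_exp_sum_eq_0_imp_coeffs_0[OF _ derivative_eq_0] T E t0 by blast
  have single: "{t\<in>T. h t = h t0} = {t0}" using inj t0 unfolding h_def inj_on_def by auto
  define q where "q = (if h t0 \<in> E then c (h t0) else 0)"
  define F where "F x = p t0 * std_Phi (g t0 * x + d t0) + poly q x * exp (fst (h t0) * x^2 + snd (h t0) * x)" for x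
  have "(F has_real_derivative 0) (at x)" for x
  proof -
    have "(F has_real_derivative p t0 * (std_phi (g t0 * x + d t0) * g t0)
        + poly (if h t0 \<in> E then quad_exp_deriv_coeff c (h t0) else 0) x * exp (fst (h t0) * x^2 + snd (h t0) * x)) (at x)"
      unfolding F_def[abs_def] q_def
      by (cases "h t0 \<in> E"; (rule derivative_eq_intros refl poly_DERIV | simp)+)
         (auto simp: quad_exp_deriv_coeff_def algebra_simps)
    also have "p t0 * (std_phi (g t0 * x + d t0) * g t0)
        + poly (if h t0 \<in> E then quad_exp_deriv_coeff c (h t0) else 0) x * exp (fst (h t0) * x^2 + snd (h t0) * x)
       = poly (cc (h t0)) x * exp (fst (h t0) * x^2 + snd (h t0) * x)"
      unfolding phi cc_def single using t0 by (auto simp: algebra_simps)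
    finally show ?thesis using \<open>cc (h t0) = 0\<close> by simp
  qed
  then have "p t0 * std_Phi (g t0 * x + d t0) + poly q x * exp (fst (h t0) * x^2 + snd (h t0) * x) = F 0" for x
    using DERIV_isconst_all F_def by metis
  moreover have "g t0 \<noteq> 0" "fst (h t0) < 0" using g[OF t0] by (auto simp: h_def)
  ultimately show "p t0 = 0" using std_Phi_affine_plus_quad_exp_const_imp_0 by blast
qed

lemma mixed_sum_common_exponent_const:
  fixes T :: "'i set" and g d :: "'i \<Rightarrow> real"
  assumes T: "finite T" and g: "\<And>t. t \<in> T \<Longrightarrow> g t \<noteq> 0"
    and inj: "inj_on (\<lambda>t. ((g t)^2, g t * d t)) T" and E: "finite E"
    and deg: "\<And>t. t \<in> T \<Longrightarrow> degree (P t) = 0"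
    and H: "\<And>x. mixed_sum T P (\<lambda>_. 0) (\<lambda>_. 0) g d E c x = 0"
  shows "\<forall>t\<in>T. P t = 0"
proof -
  have "poly (P t) x = coeff (P t) 0" if "t \<in> T" for t x
    by (simp add: poly_altdef deg[OF that])
  then have "(\<Sum>t\<in>T. coeff (P t) 0 * std_Phi (g t * x + d t)) + quad_exp_sum E c x = 0" for x
    using H[of x] by (simp add: mixed_sum_def)
  then have "\<forall>t\<in>T. coeff (P t) 0 = 0" by (intro std_Phi_sum_eq_0_imp_coeffs_0[OF T g inj E]) auto
  then show ?thesis using deg by (metis degree_eq_zeroE coeff_pCons_0 pCons_0_0)
qed

lemma mixed_sum_common_exponent_eq_0:
  fixes T :: "'i set" and g d :: "'i \<Rightarrow> real"
  assumes T: "finite T" and g: "\<And>t. t \<in> T \<Longrightarrow> g t \<noteq> 0"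
    and inj: "inj_on (\<lambda>t. ((g t)^2, g t * d t)) T"
  shows "(\<And>t. t \<in> T \<Longrightarrow> degree (P t) \<le> n) \<Longrightarrow> finite E \<Longrightarrow>
     (\<And>x. mixed_sum T P (\<lambda>_. 0) (\<lambda>_. 0) g d E c x = 0) \<Longrightarrow> \<forall>t\<in>T. P t = 0"
proof (induction n arbitrary: P E c)
  case 0
  then show ?case by (intro mixed_sum_common_exponent_const[OF T g inj]) auto
next
  case (Suc n)
  have "twisted_pderiv (\<lambda>_. 0) (\<lambda>_. 0) 0 0 t = pderiv" for t :: 'i
    by (simp add: twisted_pderiv_same_exponent)
  then obtain E' c' where "finite E'" "\<And>x. mixed_sum T (\<lambda>t. pderiv (P t)) (\<lambda>_. 0) (\<lambda>_. 0) g d E' c' x = 0"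
    using mixed_sum_twisted_pderiv_eq_0[OF T Suc.prems(2,3), of 0 0] by auto
  moreover have "degree (pderiv (P t)) \<le> n" if "t \<in> T" for t
    using Suc.prems(1)[OF that] by (simp add: degree_pderiv)
  ultimately have "\<forall>t\<in>T. pderiv (P t) = 0" using Suc.IH[of "\<lambda>t. pderiv (P t)" E' c'] by blast
  then have "\<And>t. t \<in> T \<Longrightarrow> degree (P t) = 0" by (simp add: pderiv_eq_0_iff)
  then show ?case using mixed_sum_common_exponent_const[OF T g inj Suc.prems(2)] Suc.prems(3) by blast
qed

lemma funpow_pderiv_eq_0: "degree q < n \<Longrightarrow> (pderiv ^^ n) (q :: real poly) = 0"
proof (induction n arbitrary: q)
  case 0 then show ?case by simp
next
  case (Suc n)
  show ?case
  proof (cases n)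
    case 0
    with Suc.prems have "degree q = 0" by simp
    then show ?thesis using 0 by (simp add: pderiv_eq_0_iff)
  next
    case (Suc m)
    have "degree (pderiv q) < n" using Suc.prems Suc by (simp add: degree_pderiv)
    then show ?thesis by (simp add: funpow_Suc_right Suc.IH del: funpow.simps)
  qed
qed

lemma twisted_pderiv_0: "twisted_pderiv a b \<alpha> \<beta> t 0 = 0" by (simp add: twisted_pderiv_def)

lemma funpow_twisted_pderiv_0: "(twisted_pderiv a b \<alpha> \<beta> t ^^ n) 0 = 0"
  by (induction n) (auto simp: twisted_pderiv_0)

lemma twisted_pderiv_nonzero:
  assumes "(a t, b t) \<noteq> (\<alpha>, \<beta>)" "q \<noteq> 0"
  shows "twisted_pderiv a b \<alpha> \<beta> t q \<noteq> 0"
proof -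
  define l where "l = [:b t - \<beta>, 2 * (a t - \<alpha>):]"
  have l: "l \<noteq> 0" using assms(1) by (auto simp: l_def)
  have lq: "l * q \<noteq> 0" using l assms(2) by simp
  have dq: "degree q \<le> degree (l * q)" using l assms(2) by (simp add: degree_mult_eq)
  show ?thesis
  proof (cases "degree q = 0")
    case True
    then have "pderiv q = 0" by (simp add: pderiv_eq_0_iff)
    then show ?thesis using lq by (simp add: twisted_pderiv_def l_def)
  next
    case False
    then have "degree (pderiv q) < degree (l * q)" using dq by (simp add: degree_pderiv)
    then have "degree (pderiv q + l * q) = degree (l * q)" by (rule degree_add_eq_right)
    then show ?thesis using False dq by (auto simp: twisted_pderiv_def l_def)
  qed
qed

lemma funpow_twisted_pderiv_nonzero:
  assumes "(a t, b t) \<noteq> (\<alpha>, \<beta>)" "q \<noteq> 0"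
  shows "(twisted_pderiv a b \<alpha> \<beta> t ^^ n) q \<noteq> 0"
proof (induction n)
  case 0 then show ?case using assms by simp
next
  case (Suc n) then show ?case using twisted_pderiv_nonzero[of a t b \<alpha> \<beta>] assms(1) by simp
qed

lemma mixed_sum_isolate_exponent:
  assumes T: "finite T" and t0: "t0 \<in> T"
  shows "card {t\<in>T. (a t, b t) \<noteq> (a t0, b t0) \<and> P t \<noteq> 0} = n \<Longrightarrow> finite E \<Longrightarrow>
    (\<And>x. mixed_sum T P a b g d E c x = 0) \<Longrightarrow> P t0 \<noteq> 0 \<Longrightarrow>
    (\<exists>P' E' c'. finite E' \<and> (\<forall>x. mixed_sum T P' a b g d E' c' x = 0) \<and> P' t0 \<noteq> 0 \<and>
       (\<forall>t\<in>T. (a t, b t) \<noteq> (a t0, b t0) \<longrightarrow> P' t = 0))"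
proof (induction n arbitrary: P E c rule: less_induct)
  case (less n)
  define S where "S = {t\<in>T. (a t, b t) \<noteq> (a t0, b t0) \<and> P t \<noteq> 0}"
  show ?case
  proof (cases "S = {}")
    case True
    then show ?thesis using less.prems unfolding S_def by blast
  next
    case False
    then obtain t1 where t1: "t1 \<in> S" by blast
    define \<alpha> where "\<alpha> = a t1"
    define \<beta> where "\<beta> = b t1"
    define N where "N = Suc (degree (P t1))"
    obtain E' c' where E': "finite E'" "\<And>x. mixed_sum T (\<lambda>t. (twisted_pderiv a b \<alpha> \<beta> t ^^ N) (P t)) a b g d E' c' x = 0"
      using mixed_sum_funpow_twisted_pderiv_eq_0[OF T less.prems(2,3), where \<alpha>=\<alpha> and \<beta>=\<beta> and n=N] by blast
    define P' where "P' t = (twisted_pderiv a b \<alpha> \<beta> t ^^ N) (P t)" for t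
    have P't1: "P' t1 = 0"
      unfolding P'_def using twisted_pderiv_same_exponent[of a t1 b \<alpha> \<beta>] funpow_pderiv_eq_0[of "P t1" N]
      by (simp add: \<alpha>_def \<beta>_def N_def)
    have diff0: "(a t0, b t0) \<noteq> (\<alpha>, \<beta>)" using t1 by (auto simp: S_def \<alpha>_def \<beta>_def)
    have P't0: "P' t0 \<noteq> 0" unfolding P'_def using funpow_twisted_pderiv_nonzero[where a=a and b=b and t=t0, OF diff0 less.prems(4)] .
    have sub: "{t\<in>T. (a t, b t) \<noteq> (a t0, b t0) \<and> P' t \<noteq> 0} \<subseteq> S - {t1}"
      using P't1 by (auto simp: S_def P'_def funpow_twisted_pderiv_0)
    have "card {t\<in>T. (a t, b t) \<noteq> (a t0, b t0) \<and> P' t \<noteq> 0} < n"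
    proof -
      have "card {t\<in>T. (a t, b t) \<noteq> (a t0, b t0) \<and> P' t \<noteq> 0} \<le> card (S - {t1})"
        using sub T by (intro card_mono) (auto simp: S_def)
      also have "\<dots> < card S" using t1 T by (intro card_Diff1_less) (auto simp: S_def)
      finally show ?thesis using less.prems(1) by (simp add: S_def)
    qed
    from less.IH[OF this refl E'(1)] E'(2) P't0 show ?thesis unfolding P'_def by blast
  qed
qed

lemma mixed_sum_single_exponent:
  assumes T: "finite T" and E: "finite E"
    and other: "\<And>t. t \<in> T \<Longrightarrow> (a t, b t) \<noteq> (\<alpha>, \<beta>) \<Longrightarrow> P t = 0"
  defines "sh \<equiv> \<lambda>e. (fst e - \<alpha>, snd e - \<beta>)"
  shows "mixed_sum T P a b g d E c x = exp (\<alpha> * x^2 + \<beta> * x) *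
    mixed_sum {t\<in>T. (a t, b t) = (\<alpha>, \<beta>)} P (\<lambda>_. 0) (\<lambda>_. 0) g d (sh ` E) (\<lambda>e. \<Sum>e'\<in>{e'\<in>E. sh e' = e}. c e') x"
proof -
  let ?S = "{t\<in>T. (a t, b t) = (\<alpha>, \<beta>)}"
  have "(\<Sum>t\<in>T. poly (P t) x * exp (a t * x^2 + b t * x) * std_Phi (g t * x + d t)) =
        (\<Sum>t\<in>?S. poly (P t) x * exp (a t * x^2 + b t * x) * std_Phi (g t * x + d t))"
    using T other by (intro sum.mono_neutral_right) auto
  also have "\<dots> = exp (\<alpha> * x^2 + \<beta> * x) * (\<Sum>t\<in>?S. poly (P t) x * std_Phi (g t * x + d t))"
    by (simp add: sum_distrib_left algebra_simps)
  finally have Phi_part: "(\<Sum>t\<in>T. poly (P t) x * exp (a t * x^2 + b t * x) * std_Phi (g t * x + d t)) =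
    exp (\<alpha> * x^2 + \<beta> * x) * (\<Sum>t\<in>?S. poly (P t) x * std_Phi (g t * x + d t))" .
  have "quad_exp_sum E c x = exp (\<alpha> * x^2 + \<beta> * x) * (\<Sum>e\<in>E. poly (c e) x * exp (fst (sh e) * x^2 + snd (sh e) * x))"
    unfolding quad_exp_sum_def sum_distrib_left
    by (intro sum.cong refl) (simp add: sh_def exp_add[symmetric] algebra_simps)
  also have "\<dots> = exp (\<alpha> * x^2 + \<beta> * x) * quad_exp_sum (sh ` E) (\<lambda>e. \<Sum>e'\<in>{e'\<in>E. sh e' = e}. c e') x"
    by (simp add: sum_eq_quad_exp_sum_image[OF E])
  finally show ?thesis unfolding mixed_sum_def Phi_part by (simp add: algebra_simps)
qed

lemma mixed_sum_eq_0_imp_Phi_coeffs_0: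
  fixes T :: "'i set"
  assumes T: "finite T" and g: "\<And>t. t \<in> T \<Longrightarrow> g t \<noteq> 0"
    and sep: "\<And>t t'. t \<in> T \<Longrightarrow> t' \<in> T \<Longrightarrow> (a t, b t) = (a t', b t') \<Longrightarrow>
                  ((g t)^2, g t * d t) = ((g t')^2, g t' * d t') \<Longrightarrow> t = t'"
    and E: "finite E" and H: "\<And>x. mixed_sum T P a b g d E c x = 0"
  shows "\<forall>t\<in>T. P t = 0"
proof (rule ccontr)
  assume "\<not> (\<forall>t\<in>T. P t = 0)"
  then obtain t0 where t0: "t0 \<in> T" "P t0 \<noteq> 0" by blast
  obtain P' E' c' where "finite E'" and H': "\<And>x. mixed_sum T P' a b g d E' c' x = 0" and "P' t0 \<noteq> 0"
    and other: "\<And>t. t \<in> T \<Longrightarrow> (a t, b t) \<noteq> (a t0, b t0) \<Longrightarrow> P' t = 0"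
    using mixed_sum_isolate_exponent[OF T t0(1) refl E H t0(2)] by blast
  define S where "S = {t\<in>T. (a t, b t) = (a t0, b t0)}"
  have S: "finite S" "t0 \<in> S" "S \<subseteq> T" using T t0 by (auto simp: S_def)
  define sh where "sh e = (fst e - a t0, snd e - b t0)" for e :: "real \<times> real"
  have "mixed_sum S P' (\<lambda>_. 0) (\<lambda>_. 0) g d (sh ` E') (\<lambda>e. \<Sum>e'\<in>{e'\<in>E'. sh e' = e}. c' e') x = 0" for x
    using mixed_sum_single_exponent[where \<alpha>="a t0" and \<beta>="b t0" and P=P' and c=c' and x=x,
        OF T \<open>finite E'\<close> other] H'[of x]
    by (simp add: S_def sh_def[abs_def])
  moreover have "finite (sh ` E')" using \<open>finite E'\<close> by simp
  moreover have "inj_on (\<lambda>t. ((g t)^2, g t * d t)) S"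
    using sep S(3) by (auto simp: inj_on_def S_def)
  moreover have "degree (P' t) \<le> (\<Sum>t\<in>S. degree (P' t))" if "t \<in> S" for t
    using S(1) that by (intro member_le_sum) auto
  ultimately have "\<forall>t\<in>S. P' t = 0"
    using mixed_sum_common_exponent_eq_0[OF S(1), of g d] g S(3) by blast
  with S \<open>P' t0 \<noteq> 0\<close> show False by auto
qed

lemma std_Phi_quad_exp_lin_indep:
  fixes T :: "'i set" and h :: "'i \<Rightarrow> real \<times> real"
  assumes T: "finite T" and g: "\<And>t. t \<in> T \<Longrightarrow> g t \<noteq> 0"
    and sep: "\<And>t t'. t \<in> T \<Longrightarrow> t' \<in> T \<Longrightarrow> (a t, b t) = (a t', b t') \<Longrightarrow>
                  ((g t)^2, g t * d t) = ((g t')^2, g t' * d t') \<Longrightarrow> t = t'"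
    and inj: "inj_on h T"
    and H: "\<And>x. (\<Sum>t\<in>T. poly (P t) x * exp (a t * x^2 + b t * x) * std_Phi (g t * x + d t)
                 + poly (Q t) x * exp (fst (h t) * x^2 + snd (h t) * x)) = 0"
  shows "\<forall>t\<in>T. P t = 0 \<and> Q t = 0"
proof -
  have mixed: "mixed_sum T P a b g d (h ` T) (\<lambda>e. \<Sum>t\<in>{t\<in>T. h t = e}. Q t) x = 0" for x
    using H[of x] by (simp add: mixed_sum_def sum.distrib sum_eq_quad_exp_sum_image[OF T])
  have P: "\<forall>t\<in>T. P t = 0"
    by (rule mixed_sum_eq_0_imp_Phi_coeffs_0[OF T g sep _ mixed]) (use T in auto)
  have "(\<Sum>t\<in>T. poly (Q t) x * exp (fst (h t) * x^2 + snd (h t) * x)) = 0" for x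
    using H[of x] P by (simp cong: sum.cong)
  then have "\<forall>t\<in>T. Q t = 0" by (rule sum_quad_exp_eq_0_imp_coeffs_0[OF T inj])
  with P show ?thesis by blast
qed
section \<open>Closed forms for the derivatives of the skew-normal kernel\<close>

text \<open>\<open>A :: real poly poly\<close> is read as a polynomial in \<open>y\<close> whose coefficients are polynomials in a
  second variable \<open>s\<close>.\<close>

definition poly2 :: "real poly poly \<Rightarrow> real \<Rightarrow> real \<Rightarrow> real" where
  "poly2 A s y = poly (poly A [:y:]) s"

lemma poly2_add[simp]: "poly2 (A + B) s y = poly2 A s y + poly2 B s y" by (simp add: poly2_def)
lemma poly2_diff[simp]: "poly2 (A - B) s y = poly2 A s y - poly2 B s y" by (simp add: poly2_def)
lemma poly2_0[simp]: "poly2 0 s y = 0" by (simp add: poly2_def)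
lemma poly2_smult[simp]: "poly2 (smult q A) s y = poly q s * poly2 A s y" by (simp add: poly2_def)
lemma poly2_monom[simp]: "poly2 (A * monom q k) s y = poly2 A s y * poly q s * y^k"
  by (simp add: poly2_def poly_monom)
lemma poly2_const[simp]: "poly2 [:q:] s y = poly q s" by (simp add: poly2_def)
lemma poly2_pCons[simp]: "poly2 (pCons q A) s y = poly q s + y * poly2 A s y" by (simp add: poly2_def)

lemma pderiv_poly_const_arg: "pderiv (poly A [:y:]) = poly (map_poly pderiv A) [:y:]"
  by (induction A) (simp_all add: map_poly_pCons pderiv_add pderiv_mult pderiv_pCons pderiv_smult)

lemma DERIV_poly2[derivative_intros]:
  "(f has_real_derivative f') (at x within S) \<Longrightarrow>
   ((\<lambda>x. poly2 A (f x) y) has_real_derivative poly2 (map_poly pderiv A) (f x) y * f') (at x within S)"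
  unfolding poly2_def pderiv_poly_const_arg[symmetric] by (auto intro!: derivative_eq_intros)

definition poly2_at :: "real poly poly \<Rightarrow> real \<Rightarrow> real poly" where
  "poly2_at A s = map_poly (\<lambda>q. poly q s) A"

lemma poly_poly2_at: "poly (poly2_at A s) y = poly2 A s y"
  unfolding poly2_at_def poly2_def by (induction A) (simp_all add: map_poly_pCons)

lemma degree_poly2_at: "poly (lead_coeff A) s \<noteq> 0 \<Longrightarrow> degree (poly2_at A s) = degree A"
  unfolding poly2_at_def by (rule map_poly_degree_eq)

lemma exp_mult_std_phi: "exp (- (s^2*y^2)/2) * std_phi (m* s*y) = exp (- ((1+m^2)* s^2*y^2)/2) / sqrt (2*pi)"
  by (simp add: std_phi_def exp_add[symmetric] power_mult_distrib field_simps)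

text \<open>With \<open>y = x - \<theta>\<close> and \<open>s = 1 / sqrt v\<close>, the kernel and its derivatives in \<open>\<theta>\<close> and \<open>v\<close> have
  this form; \<open>exp_mult_std_phi\<close> turns the \<open>std_phi\<close>-term produced by each differentiation into a term
  of the second kind.\<close>

definition v_form :: "real \<Rightarrow> real \<Rightarrow> real poly poly \<Rightarrow> real poly poly \<Rightarrow> real \<Rightarrow> real" where
  "v_form y m A B s = poly2 A s y * exp (- (s^2*y^2)/2) * std_Phi (m* s*y) + poly2 B s y * exp (- ((1+m^2)* s^2*y^2)/2)"

text \<open>The action of \<open>d/dv\<close> on the two coefficients, using \<open>ds/dv = - s\<^sup>3 / 2\<close>.\<close>

definition v_step_Phi :: "real poly poly \<Rightarrow> real poly poly" where
  "v_step_Phi A = smult [:0,0,0,-1/2:] (map_poly pderiv A) + A * monom [:0,0,0,0,1/2:] 2"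

definition v_step_exp :: "real \<Rightarrow> real poly poly \<Rightarrow> real poly poly \<Rightarrow> real poly poly" where
  "v_step_exp m A B = smult [:0,0,0,-1/2:] (map_poly pderiv B) + B * monom [:0,0,0,0,(1+m^2)/2:] 2
      - A * monom [:0,0,0,m/(2* sqrt(2*pi)):] 1"

lemma DERIV_v_form:
  assumes "w > 0"
  shows "((\<lambda>w. v_form y m A B (1/sqrt w)) has_real_derivative v_form y m (v_step_Phi A) (v_step_exp m A B) (1/sqrt w)) (at w)"
proof -
  define s where "s = 1/sqrt w"
  have DERIV_s: "((\<lambda>w. 1/sqrt w) has_real_derivative -(1/2) * s^3) (at w)"
  proof -
    have "((\<lambda>w. 1/sqrt w) has_real_derivative - (inverse (sqrt w) / 2 / w)) (at w)"
      using assms by (auto intro!: derivative_eq_intros simp: divide_simps power2_eq_square)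
    moreover have "- (inverse (sqrt w) / 2 / w) = -(1/2) * s^3"
      using assms by (simp add: s_def power3_eq_cube divide_simps)
    ultimately show ?thesis by (simp only:)
  qed
  define E1 where "E1 = exp (- (s^2*y^2)/2)"
  define E2 where "E2 = exp (- ((1+m^2)* s^2*y^2)/2)"
  define D where "D = poly2 (map_poly pderiv A) s y * E1 * std_Phi (m * s * y)
      + poly2 A s y * (E1 * (- (2 * s * y^2)/2)) * std_Phi (m * s * y)
      + poly2 A s y * E1 * (std_phi (m * s * y) * (m * y))
      + poly2 (map_poly pderiv B) s y * E2 + poly2 B s y * (E2 * (- ((1+m^2)*(2 * s)*y^2)/2))"
  have "(v_form y m A B has_real_derivative D) (at s)"
    unfolding v_form_def[abs_def] D_def E1_def E2_def
    by (rule derivative_eq_intros refl | simp)+ (simp add: algebra_simps power2_eq_square)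
  from DERIV_chain2[OF this[unfolded s_def] DERIV_s]
  have "((\<lambda>w. v_form y m A B (1/sqrt w)) has_real_derivative D * (-(1/2) * s^3)) (at w)"
    by (simp add: s_def)
  also have "D * (-(1/2) * s^3) = v_form y m (v_step_Phi A) (v_step_exp m A B) s"
  proof -
    have e: "E1 * std_phi (m* s*y) = E2 / sqrt (2*pi)" unfolding E1_def E2_def by (rule exp_mult_std_phi)
    have "poly2 A s y * E1 * (std_phi (m* s*y) * (m*y)) = poly2 A s y * (m*y) * (E2 / sqrt (2*pi))"
      unfolding e[symmetric] by (simp add: algebra_simps)
    then show ?thesis
      unfolding D_def v_form_def v_step_Phi_def v_step_exp_def E1_def[symmetric] E2_def[symmetric]
      by (simp add: algebra_simps power2_eq_square power3_eq_cube power4_eq_xxxx)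
  qed
  finally show ?thesis by (simp add: s_def)
qed

definition v_step :: "real \<Rightarrow> real poly poly \<times> real poly poly \<Rightarrow> real poly poly \<times> real poly poly" where
  "v_step m AB = (v_step_Phi (fst AB), v_step_exp m (fst AB) (snd AB))"

lemma v_step_pair: "v_step m (A, B) = (v_step_Phi A, v_step_exp m A B)" by (simp add: v_step_def)

lemma funpow_deriv_cong_open:
  assumes "open S" "\<And>w. w \<in> S \<Longrightarrow> f w = g w" "w \<in> S"
  shows "(deriv ^^ n) f w = (deriv ^^ n) g w"
  using assms(3)
proof (induction n arbitrary: w)
  case 0 then show ?case using assms(2) by simp
next
  case (Suc n)
  have "eventually (\<lambda>x. x \<in> S) (nhds w)" using assms(1) Suc.prems by (rule eventually_nhds_in_open)
  then have "eventually (\<lambda>x. (deriv ^^ n) f x = (deriv ^^ n) g x) (nhds w)"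
    by eventually_elim (rule Suc.IH)
  then show ?case by (simp add: deriv_cong_ev)
qed

lemma funpow_deriv_v_form:
  "w > 0 \<Longrightarrow> (deriv ^^ n) (\<lambda>w. v_form y m A B (1/sqrt w)) w =
     v_form y m (fst ((v_step m ^^ n) (A, B))) (snd ((v_step m ^^ n) (A, B))) (1/sqrt w)"
proof (induction n arbitrary: A B w)
  case 0 then show ?case by simp
next
  case (Suc n)
  have "deriv (\<lambda>w. v_form y m A B (1/sqrt w)) w' = v_form y m (v_step_Phi A) (v_step_exp m A B) (1/sqrt w')" if "w' \<in> {0<..}" for w'
    using DERIV_v_form[of w' y m A B] that by (intro DERIV_imp_deriv) auto
  then have "(deriv ^^ n) (deriv (\<lambda>w. v_form y m A B (1/sqrt w))) w = (deriv ^^ n) (\<lambda>w. v_form y m (v_step_Phi A) (v_step_exp m A B) (1/sqrt w)) w"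
    using Suc.prems by (intro funpow_deriv_cong_open[of "{0<..}"]) auto
  also have "\<dots> = v_form y m (fst ((v_step m ^^ n) (v_step_Phi A, v_step_exp m A B))) (snd ((v_step m ^^ n) (v_step_Phi A, v_step_exp m A B))) (1/sqrt w)"
    using Suc by blast
  finally show ?case by (simp add: funpow_Suc_right v_step_pair del: funpow.simps)
qed

text \<open>The same for derivatives in the skewness \<open>u\<close> at fixed \<open>s\<close>; now the coefficient \<open>B\<close> is a
  polynomial in \<open>(u, y)\<close>, and the \<open>std_Phi\<close>-coefficient \<open>A\<close> does not survive one differentiation.\<close>

definition m_form :: "real \<Rightarrow> real \<Rightarrow> real poly \<Rightarrow> real poly poly \<Rightarrow> real \<Rightarrow> real" where
  "m_form y s A B u = poly A y * exp (- (s^2*y^2)/2) * std_Phi (u * s * y) + poly2 B u y * exp (- ((1+u^2)* s^2*y^2)/2)"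

definition m_step_exp :: "real \<Rightarrow> real poly \<Rightarrow> real poly poly \<Rightarrow> real poly poly" where
  "m_step_exp s A B = map_poly pderiv B - B * monom [:0, s^2:] 2 + map_poly (\<lambda>r. [:r:]) (A * [:0, s / sqrt (2*pi):])"

lemma poly2_map_const[simp]: "poly2 (map_poly (\<lambda>r. [:r:]) C) u y = poly C y"
  unfolding poly2_def by (induction C) (simp_all add: map_poly_pCons)

lemma DERIV_m_form:
  "(m_form y s A B has_real_derivative m_form y s 0 (m_step_exp s A B) u) (at u)"
proof -
  define E1 where "E1 = exp (- (s^2*y^2)/2)"
  define E2 where "E2 = exp (- ((1+u^2)* s^2*y^2)/2)"
  have "(m_form y s A B has_real_derivative
     poly A y * E1 * (std_phi (u * s * y) * (s * y))
      + poly2 (map_poly pderiv B) u y * E2 + poly2 B u y * (E2 * (- ((2*u)* s^2*y^2)/2))) (at u)"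
    unfolding m_form_def[abs_def] E1_def E2_def
    by (rule derivative_eq_intros refl | simp)+
  also have "poly A y * E1 * (std_phi (u * s * y) * (s * y))
      + poly2 (map_poly pderiv B) u y * E2 + poly2 B u y * (E2 * (- ((2*u)* s^2*y^2)/2)) = m_form y s 0 (m_step_exp s A B) u"
  proof -
    have e: "E1 * std_phi (u * s * y) = E2 / sqrt (2*pi)" unfolding E1_def E2_def using exp_mult_std_phi[of s y u] by (simp add: mult.assoc)
    have "poly A y * E1 * (std_phi (u * s * y) * (s * y)) = poly A y * (s * y) * (E2 / sqrt (2*pi))"
      unfolding e[symmetric] by (simp add: algebra_simps)
    then show ?thesis
      unfolding m_form_def m_step_exp_def E2_def[symmetric]
      by (simp add: algebra_simps power2_eq_square)
  qed
  finally show ?thesis .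
qed

definition m_step :: "real \<Rightarrow> real poly \<times> real poly poly \<Rightarrow> real poly \<times> real poly poly" where
  "m_step s AB = (0, m_step_exp s (fst AB) (snd AB))"

lemma funpow_deriv_m_form:
  "(deriv ^^ n) (m_form y s A B) u = m_form y s (fst ((m_step s ^^ n) (A, B))) (snd ((m_step s ^^ n) (A, B))) u"
proof (induction n arbitrary: A B u)
  case 0 then show ?case by simp
next
  case (Suc n)
  have "deriv (m_form y s A B) = m_form y s 0 (m_step_exp s A B)"
    using DERIV_m_form[of y s A B] by (intro ext DERIV_imp_deriv) auto
  then show ?case using Suc[of 0 "m_step_exp s A B"] by (simp add: funpow_Suc_right m_step_def del: funpow.simps)
qed

lemma funpow_d_v: "(d_v ^^ n) G \<theta> v m = (deriv ^^ n) (\<lambda>w. G \<theta> w m) v"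
  by (induction n arbitrary: v) (simp_all add: d_v_def)

lemma funpow_d_m: "(d_m ^^ n) G \<theta> v = (deriv ^^ n) (\<lambda>u. G \<theta> v u)"
  by (induction n) (simp_all add: d_m_def)

definition skew_const :: real where "skew_const = 2 / sqrt (2*pi)"

lemma skewn_eq_v_form: "skewn x \<theta> w m = v_form (x-\<theta>) m [:[:0,skew_const:]:] 0 (1/sqrt w)"
  by (simp add: skewn_def v_form_def std_phi_def skew_const_def power_divide field_simps)

lemma skewn_eq_m_form: "skewn x \<theta> v u = m_form (x-\<theta>) (1/sqrt v) [:skew_const/sqrt v:] 0 u"
  by (simp add: skewn_def m_form_def std_phi_def skew_const_def power_divide field_simps)

lemma d_theta_skewn:
  assumes w: "w > 0"
  defines "s \<equiv> 1/sqrt w"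
  shows "d_theta (skewn x) \<theta> w u =
    skew_const * s^3 * (x-\<theta>) * exp (- (s^2*(x-\<theta>)^2)/2) * std_Phi (u * s * (x-\<theta>))
    - skew_const * u * s^2 / sqrt (2*pi) * exp (- ((1+u^2)* s^2*(x-\<theta>)^2)/2)"
proof -
  have sk: "skewn x t w u = skew_const * s * exp (- (s^2*(x-t)^2)/2) * std_Phi (u * s * (x-t))" for t
    by (simp add: skewn_def std_phi_def skew_const_def s_def power_divide field_simps)
  have "((\<lambda>t. skewn x t w u) has_real_derivative
      skew_const * s * (exp (- (s^2*(x-\<theta>)^2)/2) * (s^2 * (x-\<theta>))) * std_Phi (u * s * (x-\<theta>))
      + skew_const * s * exp (- (s^2*(x-\<theta>)^2)/2) * (std_phi (u * s * (x-\<theta>)) * (- (u * s)))) (at \<theta>)"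
    unfolding sk by (rule derivative_eq_intros refl | simp)+ (simp add: field_simps power2_eq_square)
  then have "d_theta (skewn x) \<theta> w u =
      skew_const * s * (exp (- (s^2*(x-\<theta>)^2)/2) * (s^2 * (x-\<theta>))) * std_Phi (u * s * (x-\<theta>))
      + skew_const * s * exp (- (s^2*(x-\<theta>)^2)/2) * (std_phi (u * s * (x-\<theta>)) * (- (u * s)))"
    unfolding d_theta_def by (rule DERIV_imp_deriv)
  also have "\<dots> = skew_const * s^3 * (x-\<theta>) * exp (- (s^2*(x-\<theta>)^2)/2) * std_Phi (u * s * (x-\<theta>))
    - skew_const * u * s^2 / sqrt (2*pi) * exp (- ((1+u^2)* s^2*(x-\<theta>)^2)/2)"
  proof -
    define E1 where "E1 = exp (- (s^2*(x-\<theta>)^2)/2)"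
    define E2 where "E2 = exp (- ((1+u^2)* s^2*(x-\<theta>)^2)/2)"
    define P where "P = std_phi (u * s * (x-\<theta>))"
    have e: "E1 * P = E2 / sqrt (2*pi)"
      unfolding E1_def E2_def P_def using exp_mult_std_phi[of s "x-\<theta>" u] by (simp add: mult.assoc)
    have "skew_const * s * E1 * (P * (- (u * s))) = - (skew_const * u * s^2) * (E1 * P)"
      by (simp add: algebra_simps power2_eq_square)
    then show ?thesis
      unfolding E1_def[symmetric] E2_def[symmetric] P_def[symmetric] e
      by (simp add: algebra_simps power3_eq_cube power2_eq_square)
  qed
  finally show ?thesis .
qed

definition v_init :: "nat \<Rightarrow> real \<Rightarrow> real poly poly \<times> real poly poly" where
  "v_init a m = (if a = 0 then ([:[:0,skew_const:]:], 0) else ([:0, [:0,0,0,skew_const:]:], [:[:0,0,-skew_const*m/sqrt (2*pi):]:]))"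

definition m_init :: "nat \<Rightarrow> real \<Rightarrow> real poly \<times> real poly poly" where
  "m_init a s = (if a = 0 then ([:skew_const* s:], 0) else ([:0, skew_const* s^3:], [:[:0, -skew_const* s^2/sqrt (2*pi):]:]))"

lemma funpow_d_theta_eq_v_form:
  assumes "w > 0" "a \<le> 1"
  shows "(d_theta ^^ a) (skewn x) \<theta> w m = v_form (x-\<theta>) m (fst (v_init a m)) (snd (v_init a m)) (1/sqrt w)"
proof (cases "a = 0")
  case True then show ?thesis by (simp add: v_init_def skewn_eq_v_form)
next
  case False
  then have a: "a = 1" using assms by simp
  show ?thesis using assms(1) unfolding a
    by (simp add: v_init_def d_theta_skewn v_form_def algebra_simps power2_eq_square power3_eq_cube)
qed

lemma funpow_d_theta_eq_m_form:
  assumes "v > 0" "a \<le> 1"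
  shows "(d_theta ^^ a) (skewn x) \<theta> v u = m_form (x-\<theta>) (1/sqrt v) (fst (m_init a (1/sqrt v))) (snd (m_init a (1/sqrt v))) u"
proof (cases "a = 0")
  case True then show ?thesis by (simp add: m_init_def skewn_eq_m_form)
next
  case False
  then have a: "a = 1" using assms by simp
  show ?thesis using assms(1) unfolding a
    by (simp add: m_init_def d_theta_skewn m_form_def algebra_simps power2_eq_square power3_eq_cube)
qed

lemma skewn_deriv_eq_v_form:
  assumes "v > 0" "a \<le> 1"
  shows "skewn_deriv (a, b, 0) x \<theta> v m =
    v_form (x-\<theta>) m (fst ((v_step m ^^ b) (v_init a m))) (snd ((v_step m ^^ b) (v_init a m))) (1/sqrt v)"
proof -
  have "skewn_deriv (a, b, 0) x \<theta> v m = (deriv ^^ b) (\<lambda>w. (d_theta ^^ a) (skewn x) \<theta> w m) v"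
    by (simp add: skewn_deriv_def funpow_d_v)
  also have "\<dots> = (deriv ^^ b) (\<lambda>w. v_form (x-\<theta>) m (fst (v_init a m)) (snd (v_init a m)) (1/sqrt w)) v"
    using assms by (intro funpow_deriv_cong_open[of "{0<..}"]) (auto simp: funpow_d_theta_eq_v_form)
  also have "\<dots> = v_form (x-\<theta>) m (fst ((v_step m ^^ b) (v_init a m))) (snd ((v_step m ^^ b) (v_init a m))) (1/sqrt v)"
    using funpow_deriv_v_form[OF assms(1)] by simp
  finally show ?thesis .
qed

lemma skewn_deriv_eq_m_form:
  assumes "v > 0" "a \<le> 1"
  shows "skewn_deriv (a, 0, c) x \<theta> v m =
    m_form (x-\<theta>) (1/sqrt v) (fst ((m_step (1/sqrt v) ^^ c) (m_init a (1/sqrt v)))) (snd ((m_step (1/sqrt v) ^^ c) (m_init a (1/sqrt v)))) m"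
proof -
  have "skewn_deriv (a, 0, c) x \<theta> v m = (deriv ^^ c) (\<lambda>u. (d_theta ^^ a) (skewn x) \<theta> v u) m"
    by (simp add: skewn_deriv_def funpow_d_m)
  also have "(\<lambda>u. (d_theta ^^ a) (skewn x) \<theta> v u) = m_form (x-\<theta>) (1/sqrt v) (fst (m_init a (1/sqrt v))) (snd (m_init a (1/sqrt v)))"
    using assms by (auto simp: funpow_d_theta_eq_m_form)
  also have "(deriv ^^ c) \<dots> m = m_form (x-\<theta>) (1/sqrt v) (fst ((m_step (1/sqrt v) ^^ c) (m_init a (1/sqrt v)))) (snd ((m_step (1/sqrt v) ^^ c) (m_init a (1/sqrt v)))) m"
    using funpow_deriv_m_form by simp
  finally show ?thesis .
qed

lemma v_step_Phi_degree:
  assumes A: "A \<noteq> 0" and l: "poly (lead_coeff A) s \<noteq> 0" and s: "s \<noteq> 0"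
  shows "v_step_Phi A \<noteq> 0 \<and> degree (v_step_Phi A) = degree A + 2 \<and> poly (lead_coeff (v_step_Phi A)) s \<noteq> 0"
proof -
  define q :: "real poly" where "q = [:0,0,0,0,1/2:]"
  have q: "q \<noteq> 0" by (simp add: q_def)
  have m: "monom q 2 \<noteq> 0" using q by simp
  have d2: "degree (A * monom q 2) = degree A + 2" using A m q by (simp add: degree_mult_eq degree_monom_eq)
  have d1: "degree (smult [:0,0,0,-1/2:] (map_poly pderiv A)) < degree (A * monom q 2)"
    using degree_smult_le[of "[:0,0,0,-1/2:]" "map_poly pderiv A"] map_poly_degree_leq[of pderiv A] d2 by linarith
  have deg: "degree (v_step_Phi A) = degree A + 2"
    unfolding v_step_Phi_def q_def[symmetric] using degree_add_eq_right[OF d1] d2 by simp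
  have lc: "lead_coeff (v_step_Phi A) = lead_coeff A * q"
  proof -
    have "lead_coeff (v_step_Phi A) = lead_coeff (A * monom q 2)"
      unfolding v_step_Phi_def q_def[symmetric] by (rule lead_coeff_add_le[OF d1])
    also have "\<dots> = lead_coeff A * q" by (simp only: lead_coeff_mult lead_coeff_monom)
    finally show ?thesis .
  qed
  have "poly (lead_coeff (v_step_Phi A)) s \<noteq> 0" using l s by (simp add: lc q_def)
  then show ?thesis using deg by auto
qed

lemma v_iter_degree:
  assumes s: "s > 0" and a: "a \<le> 1"
  shows "fst ((v_step m ^^ b) (v_init a m)) \<noteq> 0 \<and> degree (fst ((v_step m ^^ b) (v_init a m))) = a + 2*b
     \<and> poly (lead_coeff (fst ((v_step m ^^ b) (v_init a m)))) s \<noteq> 0"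
proof (induction b)
  case 0
  show ?case
  proof (cases "a = 0")
    case True then show ?thesis using s by (simp add: v_init_def skew_const_def)
  next
    case False then have "a = 1" using a by simp
    then show ?thesis using s by (simp add: v_init_def skew_const_def)
  qed
next
  case (Suc b)
  have e: "fst ((v_step m ^^ Suc b) (v_init a m)) = v_step_Phi (fst ((v_step m ^^ b) (v_init a m)))"
    by (simp add: v_step_def)
  define A where "A = fst ((v_step m ^^ b) (v_init a m))"
  have h: "A \<noteq> 0" "degree A = a + 2*b" "poly (lead_coeff A) s \<noteq> 0" using Suc by (auto simp: A_def)
  have H: "v_step_Phi A \<noteq> 0 \<and> degree (v_step_Phi A) = degree A + 2 \<and> poly (lead_coeff (v_step_Phi A)) s \<noteq> 0"
    using s by (intro v_step_Phi_degree[OF h(1) h(3)]) simp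
  show ?case unfolding e A_def[symmetric]
  proof (intro conjI)
    show "degree (v_step_Phi A) = a + 2 * Suc b" using conjunct1[OF conjunct2[OF H]] h(2) by simp
  qed (use H in blast)+
qed

lemma m_step_exp_degree:
  assumes B: "B \<noteq> 0" and l: "poly (lead_coeff B) m \<noteq> 0" and s: "s \<noteq> 0" and m: "m \<noteq> 0"
  shows "m_step_exp s 0 B \<noteq> 0 \<and> degree (m_step_exp s 0 B) = degree B + 2 \<and> poly (lead_coeff (m_step_exp s 0 B)) m \<noteq> 0"
proof -
  define q :: "real poly" where "q = [:0, s^2:]"
  have q: "q \<noteq> 0" using s by (simp add: q_def)
  have mo: "monom q 2 \<noteq> 0" using q by simp
  have d2: "degree (- (B * monom q 2)) = degree B + 2" using B mo q by (simp add: degree_mult_eq degree_monom_eq)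
  have d1: "degree (map_poly pderiv B) < degree (- (B * monom q 2))"
    using map_poly_degree_leq[of pderiv B] d2 by linarith
  have eq: "m_step_exp s 0 B = map_poly pderiv B + - (B * monom q 2)" by (simp add: m_step_exp_def q_def)
  have deg: "degree (m_step_exp s 0 B) = degree B + 2"
    unfolding eq using degree_add_eq_right[OF d1] d2 by simp
  have lc: "lead_coeff (m_step_exp s 0 B) = - (lead_coeff B * q)"
  proof -
    have "lead_coeff (m_step_exp s 0 B) = lead_coeff (- (B * monom q 2))"
      unfolding eq by (rule lead_coeff_add_le[OF d1])
    also have "\<dots> = - (lead_coeff B * q)" by (simp only: lead_coeff_minus lead_coeff_mult lead_coeff_monom)
    finally show ?thesis .
  qed
  have "poly (lead_coeff (m_step_exp s 0 B)) m \<noteq> 0" using l s m by (simp add: lc q_def)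
  then show ?thesis using deg by auto
qed

lemma m_step_init_degree:
  assumes s: "s > 0" and m: "m \<noteq> 0" and a: "a \<le> 1"
  shows "m_step_exp s (fst (m_init a s)) (snd (m_init a s)) \<noteq> 0 \<and> degree (m_step_exp s (fst (m_init a s)) (snd (m_init a s))) = a + 1
     \<and> poly (lead_coeff (m_step_exp s (fst (m_init a s)) (snd (m_init a s)))) m \<noteq> 0"
proof (cases "a = 0")
  case True
  have e: "m_step_exp s (fst (m_init a s)) (snd (m_init a s)) = [:0, [:skew_const * s * (s / sqrt (2*pi)):]:]"
    using True by (simp add: m_init_def m_step_exp_def map_poly_pCons)
  show ?thesis unfolding e using True s by (simp add: skew_const_def)
next
  case False
  then have a1: "a = 1" using a by simp
  define e where "e = - skew_const * s^2 / sqrt (2*pi)"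
  define f where "f = skew_const * s^3 * (s / sqrt (2*pi))"
  have eq: "m_step_exp s (fst (m_init a s)) (snd (m_init a s)) = [:[:e:], 0, [:f, 0, - e * s^2:]:]"
    using a1 by (simp add: m_init_def m_step_exp_def map_poly_pCons e_def f_def monom_Suc monom_0 numeral_2_eq_2 pderiv_pCons algebra_simps)
  have f0: "f > 0" using s by (simp add: f_def skew_const_def)
  have "poly [:f, 0, - e * s^2:] m = f * (1 + m^2)"
    by (simp add: e_def f_def skew_const_def field_simps power2_eq_square power3_eq_cube)
  moreover have "f * (1 + m^2) \<noteq> 0" using f0 zero_le_power2[of m] by (metis add_pos_nonneg mult_pos_pos less_irrefl zero_less_one)
  ultimately show ?thesis unfolding eq using a1 f0 by auto
qed

lemma m_iter_degree:
  assumes s: "s > 0" and m: "m \<noteq> 0" and a: "a \<le> 1" and c: "c \<ge> 1"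
  shows "fst ((m_step s ^^ c) (m_init a s)) = 0 \<and> snd ((m_step s ^^ c) (m_init a s)) \<noteq> 0 \<and>
     degree (snd ((m_step s ^^ c) (m_init a s))) = a + 2*c - 1
     \<and> poly (lead_coeff (snd ((m_step s ^^ c) (m_init a s)))) m \<noteq> 0"
  using c
proof (induction c rule: dec_induct)
  case base
  define X where "X = m_step_exp s (fst (m_init a s)) (snd (m_init a s))"
  have st: "(m_step s ^^ 1) (m_init a s) = (0, X)" by (simp add: m_step_def X_def)
  have H: "X \<noteq> 0 \<and> degree X = a + 1 \<and> poly (lead_coeff X) m \<noteq> 0" using m_step_init_degree[OF s m a] unfolding X_def .
  show ?case unfolding st fst_conv snd_conv
  proof (intro conjI)
    show "degree X = a + 2 * 1 - 1" using H by linarith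
  qed (use H in blast)+
next
  case (step c)
  have f0: "fst ((m_step s ^^ c) (m_init a s)) = 0" using step.IH by blast
  have e: "(m_step s ^^ Suc c) (m_init a s) = (0, m_step_exp s 0 (snd ((m_step s ^^ c) (m_init a s))))"
  proof -
    have "(m_step s ^^ Suc c) (m_init a s) = m_step s ((m_step s ^^ c) (m_init a s))" by simp
    also have "\<dots> = (0, m_step_exp s (fst ((m_step s ^^ c) (m_init a s))) (snd ((m_step s ^^ c) (m_init a s))))" by (simp only: m_step_def)
    finally show ?thesis unfolding f0 .
  qed
  define B where "B = snd ((m_step s ^^ c) (m_init a s))"
  have h: "B \<noteq> 0" "degree B = a + 2*c - 1" "poly (lead_coeff B) m \<noteq> 0" using step by (auto simp: B_def)
  have H: "m_step_exp s 0 B \<noteq> 0 \<and> degree (m_step_exp s 0 B) = degree B + 2 \<and> poly (lead_coeff (m_step_exp s 0 B)) m \<noteq> 0"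
    using s m by (intro m_step_exp_degree[OF h(1) h(3)]) simp_all
  show ?case unfolding e B_def[symmetric] fst_conv snd_conv
  proof (intro conjI)
    show "degree (m_step_exp s 0 B) = a + 2 * Suc c - 1" using conjunct1[OF conjunct2[OF H]] h(2) step.hyps by simp
  qed (use H in auto)
qed

lemma smult_sum_eq_0_distinct_degrees:
  fixes q :: "'k \<Rightarrow> real poly"
  assumes "finite K" "\<And>k. k \<in> K \<Longrightarrow> q k \<noteq> 0" "inj_on (\<lambda>k. degree (q k)) K"
    "(\<Sum>k\<in>K. smult (w k) (q k)) = 0"
  shows "\<forall>k\<in>K. w k = 0"
  using assms
proof (induction "card K" arbitrary: K)
  case 0 then show ?case by auto
next
  case (Suc n)
  then have ne: "K \<noteq> {}" by auto
  define D where "D = Max ((\<lambda>k. degree (q k)) ` K)"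
  have "D \<in> (\<lambda>k. degree (q k)) ` K" unfolding D_def using Suc.prems(1) ne by (intro Max_in) auto
  then obtain k0 where k0: "k0 \<in> K" "degree (q k0) = D" by auto
  have le: "degree (q k) \<le> D" if "k \<in> K" for k using Suc.prems(1) that by (auto simp: D_def)
  have lt: "degree (q k) < D" if "k \<in> K" "k \<noteq> k0" for k
    using le[OF that(1)] Suc.prems(3) that k0 unfolding inj_on_def by force
  have "0 = coeff (\<Sum>k\<in>K. smult (w k) (q k)) D" using Suc.prems(4) by simp
  also have "\<dots> = (\<Sum>k\<in>K. w k * coeff (q k) D)" by (simp add: coeff_sum)
  also have "\<dots> = w k0 * coeff (q k0) D + (\<Sum>k\<in>K-{k0}. w k * coeff (q k) D)"
    using Suc.prems(1) k0 by (simp add: sum.remove)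
  also have "(\<Sum>k\<in>K-{k0}. w k * coeff (q k) D) = 0"
    by (intro sum.neutral) (use lt coeff_eq_0 in auto)
  finally have "w k0 * lead_coeff (q k0) = 0" using k0 by simp
  then have w0: "w k0 = 0" using Suc.prems(2)[OF k0(1)] by simp
  have "(\<Sum>k\<in>K-{k0}. smult (w k) (q k)) = 0"
    using Suc.prems(4) Suc.prems(1) k0 by (simp add: sum.remove w0)
  moreover have "n = card (K - {k0})" using Suc.hyps(2) k0 Suc.prems(1) by auto
  ultimately have "\<forall>k\<in>K-{k0}. w k = 0"
    by (intro Suc.hyps(1)) (use Suc.prems(1,2,3) inj_on_diff in auto)
  with w0 show ?case by auto
qed

lemma poly2_at_nonzero:
  assumes "poly (lead_coeff A) s \<noteq> 0"
  shows "poly2_at A s \<noteq> 0 \<and> degree (poly2_at A s) = degree A"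
proof -
  have "coeff (poly2_at A s) (degree A) = poly (lead_coeff A) s" by (simp add: poly2_at_def coeff_map_poly)
  then show ?thesis using assms degree_poly2_at[OF assms] by auto
qed

definition skew_Phi_poly :: "real \<Rightarrow> real \<Rightarrow> nat \<times> nat \<times> nat \<Rightarrow> real poly" where
  "skew_Phi_poly v m \<kappa> = (case \<kappa> of (a, b, c) \<Rightarrow> if c = 0 then poly2_at (fst ((v_step m ^^ b) (v_init a m))) (1/sqrt v)
      else fst ((m_step (1/sqrt v) ^^ c) (m_init a (1/sqrt v))))"

definition skew_exp_poly :: "real \<Rightarrow> real \<Rightarrow> nat \<times> nat \<times> nat \<Rightarrow> real poly" where
  "skew_exp_poly v m \<kappa> = (case \<kappa> of (a, b, c) \<Rightarrow> if c = 0 then poly2_at (snd ((v_step m ^^ b) (v_init a m))) (1/sqrt v)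
      else poly2_at (snd ((m_step (1/sqrt v) ^^ c) (m_init a (1/sqrt v)))) m)"

lemma F_set_cases:
  assumes "\<kappa> \<in> F_set r"
  obtains a b where "\<kappa> = (a, b, 0)" "a \<le> 1" "a + b \<le> r"
  | a c where "\<kappa> = (a, 0, c)" "a \<le> 1" "c \<ge> 1" "a + c \<le> r"
  using assms unfolding F_set_def by auto

lemma skewn_deriv_eq:
  assumes v: "v > 0" and k: "\<kappa> \<in> F_set r"
  shows "skewn_deriv \<kappa> x \<theta> v m =
    poly (skew_Phi_poly v m \<kappa>) (x-\<theta>) * exp (- ((1/sqrt v)^2*(x-\<theta>)^2)/2) * std_Phi (m * (1/sqrt v) * (x-\<theta>))
    + poly (skew_exp_poly v m \<kappa>) (x-\<theta>) * exp (- ((1+m^2)*(1/sqrt v)^2*(x-\<theta>)^2)/2)"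
  using k
proof (cases rule: F_set_cases)
  case (1 a b)
  show ?thesis unfolding 1(1) skewn_deriv_eq_v_form[OF v 1(2)]
    by (simp add: v_form_def skew_Phi_poly_def skew_exp_poly_def poly_poly2_at)
next
  case (2 a c)
  show ?thesis unfolding 2(1) skewn_deriv_eq_m_form[OF v 2(2)] using 2
    by (simp add: m_form_def skew_Phi_poly_def skew_exp_poly_def poly_poly2_at)
qed

section \<open>Linear independence within one component\<close>

definition F_set_v :: "nat \<Rightarrow> (nat \<times> nat \<times> nat) set" where
  "F_set_v r = {(a, b, c). a \<le> 1 \<and> c = 0 \<and> a + b + c \<le> r}"

definition F_set_m :: "nat \<Rightarrow> (nat \<times> nat \<times> nat) set" where
  "F_set_m r = {(a, b, c). a \<le> 1 \<and> b = 0 \<and> c \<ge> 1 \<and> a + b + c \<le> r}"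

lemma F_set_eq_Un: "F_set r = F_set_v r \<union> F_set_m r"
  by (simp add: F_set_def F_set_v_def F_set_m_def)

lemma F_set_v_m_disjoint: "F_set_v r \<inter> F_set_m r = {}"
  by (auto simp: F_set_v_def F_set_m_def)

lemma finite_F_set_v: "finite (F_set_v r)"
  by (rule finite_subset[of _ "{..1} \<times> {..r} \<times> {..r}"]) (auto simp: F_set_v_def)

lemma finite_F_set_m: "finite (F_set_m r)"
  by (rule finite_subset[of _ "{..1} \<times> {..r} \<times> {..r}"]) (auto simp: F_set_m_def)

lemma skew_Phi_poly_F_set_v:
  assumes "v > 0" "\<kappa> \<in> F_set_v r"
  shows "skew_Phi_poly v m \<kappa> \<noteq> 0 \<and> degree (skew_Phi_poly v m \<kappa>) = fst \<kappa> + 2 * fst (snd \<kappa>)"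
proof -
  obtain a b where \<kappa>: "\<kappa> = (a, b, 0)" "a \<le> 1" using assms(2) by (auto simp: F_set_v_def)
  define A where "A = fst ((v_step m ^^ b) (v_init a m))"
  have "A \<noteq> 0 \<and> degree A = a + 2 * b \<and> poly (lead_coeff A) (1 / sqrt v) \<noteq> 0"
    unfolding A_def by (rule v_iter_degree) (use assms \<kappa> in auto)
  then have "poly2_at A (1 / sqrt v) \<noteq> 0 \<and> degree (poly2_at A (1 / sqrt v)) = a + 2 * b"
    using poly2_at_nonzero[of A "1 / sqrt v"] by auto
  then show ?thesis by (simp add: \<kappa> skew_Phi_poly_def A_def)
qed

lemma skew_Phi_poly_F_set_m:
  assumes "v > 0" "m \<noteq> 0" "\<kappa> \<in> F_set_m r"
  shows "skew_Phi_poly v m \<kappa> = 0"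
proof -
  obtain a c where \<kappa>: "\<kappa> = (a, 0, c)" "a \<le> 1" "c \<ge> 1" using assms(3) by (auto simp: F_set_m_def)
  have "1 / sqrt v > 0" using assms(1) by simp
  from m_iter_degree[OF this assms(2) \<kappa>(2,3)] show ?thesis
    using \<kappa>(3) by (simp add: \<kappa> skew_Phi_poly_def)
qed

lemma skew_exp_poly_F_set_m:
  assumes "v > 0" "m \<noteq> 0" "\<kappa> \<in> F_set_m r"
  shows "skew_exp_poly v m \<kappa> \<noteq> 0 \<and> degree (skew_exp_poly v m \<kappa>) = fst \<kappa> + 2 * snd (snd \<kappa>) - 1"
proof -
  obtain a c where \<kappa>: "\<kappa> = (a, 0, c)" "a \<le> 1" "c \<ge> 1" using assms(3) by (auto simp: F_set_m_def)
  define B where "B = snd ((m_step (1 / sqrt v) ^^ c) (m_init a (1 / sqrt v)))"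
  have "B \<noteq> 0 \<and> degree B = a + 2 * c - 1 \<and> poly (lead_coeff B) m \<noteq> 0"
    unfolding B_def by (rule m_iter_degree[THEN conjunct2]) (use assms \<kappa> in auto)
  then have "poly2_at B m \<noteq> 0 \<and> degree (poly2_at B m) = a + 2 * c - 1"
    using poly2_at_nonzero[of B m] by auto
  then show ?thesis using \<kappa>(3) by (simp add: \<kappa> skew_exp_poly_def B_def)
qed

lemma parity_decomp_unique:
  fixes a a' b b' :: nat
  assumes "a \<le> 1" "a' \<le> 1" "a + 2 * b = a' + 2 * b'"
  shows "a = a' \<and> b = b'"
proof -
  have "a = (a + 2 * b) mod 2" "a' = (a' + 2 * b') mod 2" using assms(1,2) by auto
  then show ?thesis using assms(3) by simp
qed

lemma inj_on_F_set_v_degree: "inj_on (\<lambda>\<kappa>. fst \<kappa> + 2 * fst (snd \<kappa>)) (F_set_v r)"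
proof (rule inj_onI)
  fix \<kappa> \<kappa>' assume "\<kappa> \<in> F_set_v r" "\<kappa>' \<in> F_set_v r"
    and "fst \<kappa> + 2 * fst (snd \<kappa>) = fst \<kappa>' + 2 * fst (snd \<kappa>')"
  then show "\<kappa> = \<kappa>'"
    using parity_decomp_unique[of "fst \<kappa>" "fst \<kappa>'" "fst (snd \<kappa>)" "fst (snd \<kappa>')"]
    by (auto simp: F_set_v_def)
qed

lemma inj_on_F_set_m_degree: "inj_on (\<lambda>\<kappa>. fst \<kappa> + 2 * snd (snd \<kappa>) - 1) (F_set_m r)"
proof (rule inj_onI)
  fix \<kappa> \<kappa>' assume "\<kappa> \<in> F_set_m r" "\<kappa>' \<in> F_set_m r"
    and "fst \<kappa> + 2 * snd (snd \<kappa>) - 1 = fst \<kappa>' + 2 * snd (snd \<kappa>') - 1"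
  moreover from this have "fst \<kappa> + 2 * snd (snd \<kappa>) = fst \<kappa>' + 2 * snd (snd \<kappa>')"
    by (auto simp: F_set_m_def)
  ultimately show "\<kappa> = \<kappa>'"
    using parity_decomp_unique[of "fst \<kappa>" "fst \<kappa>'" "snd (snd \<kappa>)" "snd (snd \<kappa>')"]
    by (auto simp: F_set_m_def)
qed

lemma skew_polys_lin_indep:
  assumes v: "v > 0" and m: "m \<noteq> 0"
    and Phi: "(\<Sum>\<kappa>\<in>F_set r. smult (c \<kappa>) (skew_Phi_poly v m \<kappa>)) = 0"
    and exp: "(\<Sum>\<kappa>\<in>F_set r. smult (c \<kappa>) (skew_exp_poly v m \<kappa>)) = 0"
  shows "\<forall>\<kappa>\<in>F_set r. c \<kappa> = 0"
proof -
  have split: "(\<Sum>\<kappa>\<in>F_set r. f \<kappa>) = (\<Sum>\<kappa>\<in>F_set_v r. f \<kappa>) + (\<Sum>\<kappa>\<in>F_set_m r. f \<kappa>)"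
    for f :: "nat \<times> nat \<times> nat \<Rightarrow> real poly"
    unfolding F_set_eq_Un
    by (rule sum.union_disjoint) (simp_all add: finite_F_set_v finite_F_set_m F_set_v_m_disjoint)
  have "(\<Sum>\<kappa>\<in>F_set_v r. smult (c \<kappa>) (skew_Phi_poly v m \<kappa>)) = 0"
    using Phi skew_Phi_poly_F_set_m[OF v m] by (simp add: split)
  moreover have "inj_on (\<lambda>\<kappa>. degree (skew_Phi_poly v m \<kappa>)) (F_set_v r)"
    using inj_on_F_set_v_degree by (rule inj_on_cong[THEN iffD1, rotated]) (simp add: skew_Phi_poly_F_set_v[OF v])
  ultimately have c_v: "\<forall>\<kappa>\<in>F_set_v r. c \<kappa> = 0"
    using skew_Phi_poly_F_set_v[OF v] finite_F_set_v by (intro smult_sum_eq_0_distinct_degrees) auto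
  have "(\<Sum>\<kappa>\<in>F_set_m r. smult (c \<kappa>) (skew_exp_poly v m \<kappa>)) = 0"
    using exp c_v by (simp add: split)
  moreover have "inj_on (\<lambda>\<kappa>. degree (skew_exp_poly v m \<kappa>)) (F_set_m r)"
    using inj_on_F_set_m_degree by (rule inj_on_cong[THEN iffD1, rotated]) (simp add: skew_exp_poly_F_set_m[OF v m])
  ultimately have "\<forall>\<kappa>\<in>F_set_m r. c \<kappa> = 0"
    using skew_exp_poly_F_set_m[OF v m] finite_F_set_m by (intro smult_sum_eq_0_distinct_degrees) auto
  with c_v show ?thesis by (auto simp: F_set_eq_Un)
qed

section \<open>Separating the components\<close>

definition skew_Phi_coeff :: "nat \<Rightarrow> (nat \<times> nat \<times> nat \<Rightarrow> real) \<Rightarrow> real \<Rightarrow> real \<Rightarrow> real \<Rightarrow> real poly" where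
  "skew_Phi_coeff r c \<theta> v m = smult (exp (- (\<theta>^2 / (2 * v))))
     (pcompose (\<Sum>\<kappa>\<in>F_set r. smult (c \<kappa>) (skew_Phi_poly v m \<kappa>)) [:- \<theta>, 1:])"

definition skew_exp_coeff :: "nat \<Rightarrow> (nat \<times> nat \<times> nat \<Rightarrow> real) \<Rightarrow> real \<Rightarrow> real \<Rightarrow> real \<Rightarrow> real poly" where
  "skew_exp_coeff r c \<theta> v m = smult (exp (- ((1 + m^2) * \<theta>^2 / (2 * v))))
     (pcompose (\<Sum>\<kappa>\<in>F_set r. smult (c \<kappa>) (skew_exp_poly v m \<kappa>)) [:- \<theta>, 1:])"

lemma sum_F_set_skewn_deriv:
  assumes "v > 0"
  shows "(\<Sum>\<kappa>\<in>F_set r. c \<kappa> * skewn_deriv \<kappa> x \<theta> v m) =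
    poly (skew_Phi_coeff r c \<theta> v m) x * exp (- (1 / (2 * v)) * x^2 + \<theta> / v * x)
      * std_Phi (m / sqrt v * x + - (m * \<theta> / sqrt v))
    + poly (skew_exp_coeff r c \<theta> v m) x * exp (- ((1 + m^2) / (2 * v)) * x^2 + (1 + m^2) * \<theta> / v * x)"
proof -
  define E1 where "E1 = exp (- ((1/sqrt v)^2*(x-\<theta>)^2)/2)"
  define E2 where "E2 = exp (- ((1+m^2)*(1/sqrt v)^2*(x-\<theta>)^2)/2)"
  define Ph where "Ph = std_Phi (m * (1/sqrt v) * (x-\<theta>))"
  have "(\<Sum>\<kappa>\<in>F_set r. c \<kappa> * skewn_deriv \<kappa> x \<theta> v m) =
      (\<Sum>\<kappa>\<in>F_set r. poly (smult (c \<kappa>) (skew_Phi_poly v m \<kappa>)) (x - \<theta>) * E1 * Ph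
        + poly (smult (c \<kappa>) (skew_exp_poly v m \<kappa>)) (x - \<theta>) * E2)"
    by (intro sum.cong refl) (simp add: skewn_deriv_eq[OF assms] E1_def E2_def Ph_def algebra_simps)
  also have "\<dots> = poly (\<Sum>\<kappa>\<in>F_set r. smult (c \<kappa>) (skew_Phi_poly v m \<kappa>)) (x - \<theta>) * E1 * Ph
      + poly (\<Sum>\<kappa>\<in>F_set r. smult (c \<kappa>) (skew_exp_poly v m \<kappa>)) (x - \<theta>) * E2"
    by (simp add: sum.distrib poly_sum sum_distrib_right)
  also have "E1 = exp (- (\<theta>^2 / (2 * v))) * exp (- (1 / (2 * v)) * x^2 + \<theta> / v * x)"
    using assms by (simp add: E1_def power_divide exp_add[symmetric] power2_eq_square field_simps)
  also have "E2 = exp (- ((1 + m^2) * \<theta>^2 / (2 * v))) * exp (- ((1 + m^2) / (2 * v)) * x^2 + (1 + m^2) * \<theta> / v * x)"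
    using assms by (simp add: E2_def power_divide exp_add[symmetric] power2_eq_square field_simps)
  also have "Ph = std_Phi (m / sqrt v * x + - (m * \<theta> / sqrt v))"
    by (simp add: Ph_def diff_divide_distrib algebra_simps)
  finally show ?thesis
    by (simp add: skew_Phi_coeff_def skew_exp_coeff_def poly_pcompose algebra_simps)
qed

lemma skew_coeffs_eq_0_imp_0:
  assumes "v > 0" "m \<noteq> 0" "skew_Phi_coeff r c \<theta> v m = 0" "skew_exp_coeff r c \<theta> v m = 0"
  shows "\<forall>\<kappa>\<in>F_set r. c \<kappa> = 0"
proof (rule skew_polys_lin_indep[OF assms(1,2)])
  show "(\<Sum>\<kappa>\<in>F_set r. smult (c \<kappa>) (skew_Phi_poly v m \<kappa>)) = 0"
    using assms(3) pcompose_eq_0[of _ "[:- \<theta>, 1:]"] by (simp add: skew_Phi_coeff_def)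
  show "(\<Sum>\<kappa>\<in>F_set r. smult (c \<kappa>) (skew_exp_poly v m \<kappa>)) = 0"
    using assms(4) pcompose_eq_0[of _ "[:- \<theta>, 1:]"] by (simp add: skew_exp_coeff_def)
qed

lemma P2_nonzero_factor:
  assumes "P2 k0 \<theta> v m \<noteq> 0" "i < k0" "j < k0" "i \<noteq> j"
  shows "(\<theta> i - \<theta> j)^2 + (v i * (1 + (m j)^2) - v j * (1 + (m i)^2))^2 \<noteq> 0"
proof
  assume z: "(\<theta> i - \<theta> j)^2 + (v i * (1 + (m j)^2) - v j * (1 + (m i)^2))^2 = 0"
  have fin: "finite {(i, j). i < k0 \<and> j < k0 \<and> i \<noteq> j}"
    by (rule finite_subset[of _ "{..<k0} \<times> {..<k0}"]) auto
  have "P2 k0 \<theta> v m = 0" unfolding P2_def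
    using z assms(2-4) by (subst prod_zero_iff[OF fin]) auto
  with assms(1) show False by simp
qed

lemma P2_nonzero_separates:
  assumes "P2 k0 \<theta> v m \<noteq> 0" "i < k0" "j < k0" "\<theta> i = \<theta> j" "v i * (1 + (m j)^2) = v j * (1 + (m i)^2)"
  shows "i = j"
  using P2_nonzero_factor[OF assms(1-3)] assms(4,5) by fastforce

lemma P2_nonzero_inj_Phi_exponent:
  assumes "P2 k0 \<theta> v m \<noteq> 0" "\<And>i. i < k0 \<Longrightarrow> v i > 0"
  shows "inj_on (\<lambda>i. (- (1 / (2 * v i)), \<theta> i / v i, (m i / sqrt (v i))^2)) {..<k0}"
proof (rule inj_onI)
  fix i j assume ij: "i \<in> {..<k0}" "j \<in> {..<k0}"
    and eq: "(- (1 / (2 * v i)), \<theta> i / v i, (m i / sqrt (v i))^2) = (- (1 / (2 * v j)), \<theta> j / v j, (m j / sqrt (v j))^2)"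
  have pos: "v i > 0" "v j > 0" using ij assms(2) by auto
  have "v i = v j" using eq by simp
  moreover have "\<theta> i = \<theta> j" using eq pos \<open>v i = v j\<close> by simp
  moreover have "(m i)^2 = (m j)^2" using eq pos \<open>v i = v j\<close> by (simp add: power_divide)
  ultimately show "i = j" using P2_nonzero_separates[OF assms(1)] ij by simp
qed

lemma P2_nonzero_inj_exp_exponent:
  assumes "P2 k0 \<theta> v m \<noteq> 0" "\<And>i. i < k0 \<Longrightarrow> v i > 0"
  shows "inj_on (\<lambda>i. (- ((1 + (m i)^2) / (2 * v i)), (1 + (m i)^2) * \<theta> i / v i)) {..<k0}"
proof (rule inj_onI)
  fix i j assume ij: "i \<in> {..<k0}" "j \<in> {..<k0}"
    and eq: "(- ((1 + (m i)^2) / (2 * v i)), (1 + (m i)^2) * \<theta> i / v i) =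
             (- ((1 + (m j)^2) / (2 * v j)), (1 + (m j)^2) * \<theta> j / v j)"
  have pos: "v i > 0" "v j > 0" using ij assms(2) by auto
  have "(1 + (m i)^2) / (2 * v i) = (1 + (m j)^2) / (2 * v j)" using eq by simp
  then have cross: "(1 + (m i)^2) * v j = (1 + (m j)^2) * v i" using pos by (simp add: frac_eq_eq)
  have "(1 + (m i)^2) * \<theta> i * v j = (1 + (m j)^2) * \<theta> j * v i" using eq pos by (simp add: frac_eq_eq)
  then have "((1 + (m j)^2) * v i) * \<theta> i = ((1 + (m j)^2) * v i) * \<theta> j"
    using cross by (simp add: ac_simps)
  moreover have "(1 + (m j)^2) * v i > 0" using pos by (intro mult_pos_pos add_pos_nonneg) auto
  ultimately have "\<theta> i = \<theta> j" by (metis less_irrefl mult_cancel_left)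
  then show "i = j" using P2_nonzero_separates[OF assms(1)] ij cross by (simp add: ac_simps)
qed

theorem lemma4p3:
  fixes k0 r :: nat and \<theta>0 v0 m0 :: "nat \<Rightarrow> real"
  assumes distinct: "inj_on (\<lambda>i. (\<theta>0 i, v0 i, m0 i)) {..<k0}"
    and vpos: "\<And>i. i < k0 \<Longrightarrow> v0 i > 0"
    and P1nz: "P1 k0 m0 \<noteq> 0"
    and P2nz: "P2 k0 \<theta>0 v0 m0 \<noteq> 0"
    and r: "r \<ge> 1"
  shows "\<forall>c :: nat \<Rightarrow> nat \<times> nat \<times> nat \<Rightarrow> real.
           (\<forall>x. (\<Sum>i<k0. \<Sum>\<kappa>\<in>F_set r. c i \<kappa> * skewn_deriv \<kappa> x (\<theta>0 i) (v0 i) (m0 i)) = 0)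
           \<longrightarrow> (\<forall>i<k0. \<forall>\<kappa>\<in>F_set r. c i \<kappa> = 0)"
proof (rule allI, rule impI)
  fix c :: "nat \<Rightarrow> nat \<times> nat \<times> nat \<Rightarrow> real"
  assume H: "\<forall>x. (\<Sum>i<k0. \<Sum>\<kappa>\<in>F_set r. c i \<kappa> * skewn_deriv \<kappa> x (\<theta>0 i) (v0 i) (m0 i)) = 0"
  have m0_nonzero: "m0 i \<noteq> 0" if "i < k0" for i
    using P1nz that by (auto simp: P1_def prod_zero_iff)
  have "\<forall>i\<in>{..<k0}. skew_Phi_coeff r (c i) (\<theta>0 i) (v0 i) (m0 i) = 0 \<and> skew_exp_coeff r (c i) (\<theta>0 i) (v0 i) (m0 i) = 0"
  proof (rule std_Phi_quad_exp_lin_indep[where a = "\<lambda>i. - (1 / (2 * v0 i))" and b = "\<lambda>i. \<theta>0 i / v0 i"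
        and g = "\<lambda>i. m0 i / sqrt (v0 i)" and d = "\<lambda>i. - (m0 i * \<theta>0 i / sqrt (v0 i))"
        and h = "\<lambda>i. (- ((1 + (m0 i)^2) / (2 * v0 i)), (1 + (m0 i)^2) * \<theta>0 i / v0 i)"])
    show "inj_on (\<lambda>i. (- ((1 + (m0 i)^2) / (2 * v0 i)), (1 + (m0 i)^2) * \<theta>0 i / v0 i)) {..<k0}"
      by (rule P2_nonzero_inj_exp_exponent[OF P2nz vpos])
    show "i = j" if "i \<in> {..<k0}" "j \<in> {..<k0}"
      "(- (1 / (2 * v0 i)), \<theta>0 i / v0 i) = (- (1 / (2 * v0 j)), \<theta>0 j / v0 j)"
      "((m0 i / sqrt (v0 i))^2, m0 i / sqrt (v0 i) * - (m0 i * \<theta>0 i / sqrt (v0 i))) =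
       ((m0 j / sqrt (v0 j))^2, m0 j / sqrt (v0 j) * - (m0 j * \<theta>0 j / sqrt (v0 j)))" for i j
    proof -
      have "(- (1 / (2 * v0 i)), \<theta>0 i / v0 i, (m0 i / sqrt (v0 i))^2) =
            (- (1 / (2 * v0 j)), \<theta>0 j / v0 j, (m0 j / sqrt (v0 j))^2)"
        using that(3,4) unfolding prod.inject by blast
      with P2_nonzero_inj_Phi_exponent[OF P2nz vpos] that(1,2) show ?thesis
        unfolding inj_on_def by blast
    qed
    show "m0 i / sqrt (v0 i) \<noteq> 0" if "i \<in> {..<k0}" for i
      using that m0_nonzero vpos[of i] by simp
  qed (simp, unfold fst_conv snd_conv, rule trans[OF sum.cong[OF refl] H[rule_format]],
      rule sum_F_set_skewn_deriv[symmetric], simp add: vpos)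
  then show "\<forall>i<k0. \<forall>\<kappa>\<in>F_set r. c i \<kappa> = 0"
    using skew_coeffs_eq_0_imp_0 vpos m0_nonzero by blast
qed

end
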